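(* In the setting described in the context, let $\bar W=\mathbb{E}[W(k)]$. Then $\bar W$ is doubly stochastic with $\lambda_{\max}(\bar W)=1$, and, with $Q(k)=W(k)-H\bar H W(k)$ and $\gamma=\lambda_{\max}\big(\mathbb{E}[Q(k)^TQ(k)]\big)$, one has $\gamma=\lambda_2(\bar W)$, where $\lambda_2(\bar W):=\max_{\lambda\neq 1}\lambda(\bar W)$ is the largest eigenvalue of $\bar W$ different from $1$.
   Context: Let $V=\{1,\ldots,N\}$, $N\ge 2$, and let $G_I=(V,E_I)$ be a connected undirected graph which is not complete, with adjacency matrix $A$; let $B=A+I_N$. For $i\in V$ let $N_I(i)$ be the set of neighbors of $i$ in $G_I$, $\tilde N_I(i)=N_I(i)\cup\{i\}$, $m_i=\deg_{G_I}(i)+1$, $m=\sum_{i=1}^N m_i$. For $i,j\in V$ set $s_{ij}=\sum_{l=1}^{j}B(i,l)+\sum_{r=1}^{i-1}m_r$ (the last sum is $0$ for $i=1$). Let $e_1,\ldots,e_m$ be the standard basis of $\mathbb{R}^m$ and define $E_j^i=e_{s_{ij}}$ if $j\in\tilde N_I(i)$ and $E_j^i=\mathbf{0}_m$ otherwise. Let $H=\big[\sum_{i=1}^N E_1^i,\ldots,\sum_{i=1}^N E_N^i\big]\in\mathbb{R}^{m\times N}$ and $\bar H=\mathrm{diag}(1/m_1,\ldots,1/m_N)H^T$. Let $G_C=(V,E_C)$ be a communication graph with $G_m\subseteq G_C\subseteq G_I$, where $G_m$ is a maximal triangle-free spanning subgraph of $G_I$ (a triangle-free spanning subgraph such that adding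 any edge of $G_I$ not in it creates a triangle); $N_C(i)$ denotes the neighbors of $i$ in $G_C$. For $i,j\in V$ let $\mathrm{ind}(i,j)=\tilde N_I(i)\cap\tilde N_I(j)$ and $W_{ij}=I_m-\tfrac12\sum_{l\in \mathrm{ind}(i,j)}(E_l^{i}-E_l^{j})(E_l^{i}-E_l^{j})^T$. The random matrix $W(k)$ is $W_{i_kj_k}$, where $i_k$ is drawn uniformly at random from $V$ and then $j_k$ is drawn uniformly at random from $N_C(i_k)$; expectations are with respect to this random choice. *)

theory Defs
  imports "Jordan_Normal_Form.Char_Poly"
begin

definition simple_graph :: "nat \<Rightarrow> nat set set \<Rightarrow> bool" where
  "simple_graph N E \<longleftrightarrow>
     (\<forall>e\<in>E. \<exists>i j. i \<in> {1..N} \<and> j \<in> {1..N} \<and> i \<noteq> j \<and> e = {i, j})"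

definition graph_connected :: "nat \<Rightarrow> nat set set \<Rightarrow> bool" where
  "graph_connected N E \<longleftrightarrow>
     (\<forall>i\<in>{1..N}. \<forall>j\<in>{1..N}. (i, j) \<in> {(a, b). {a, b} \<in> E}\<^sup>*)"

definition graph_complete :: "nat \<Rightarrow> nat set set \<Rightarrow> bool" where
  "graph_complete N E \<longleftrightarrow>
     (\<forall>i\<in>{1..N}. \<forall>j\<in>{1..N}. i \<noteq> j \<longrightarrow> {i, j} \<in> E)"

definition triangle_free :: "nat set set \<Rightarrow> bool" where
  "triangle_free E \<longleftrightarrow>
     \<not> (\<exists>a b c. a \<noteq> b \<and> b \<noteq> c \<and> a \<noteq> c \<and> {a, b} \<in> E \<and> {b, c} \<in> E \<and> {a, c} \<in> E)"

text \<open>Maximal triangle-free spanning subgraph Em of the graph with edge set E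
  (spanning: same vertex set {1..N}, which is built into the representation).\<close>
definition max_triangle_free_spanning :: "nat set set \<Rightarrow> nat set set \<Rightarrow> bool" where
  "max_triangle_free_spanning E Em \<longleftrightarrow>
     Em \<subseteq> E \<and> triangle_free Em \<and> (\<forall>e \<in> E - Em. \<not> triangle_free (insert e Em))"

definition nbrs :: "nat \<Rightarrow> nat set set \<Rightarrow> nat \<Rightarrow> nat set" where
  "nbrs N E i = {j \<in> {1..N}. {i, j} \<in> E}"

definition cnbrs :: "nat \<Rightarrow> nat set set \<Rightarrow> nat \<Rightarrow> nat set" where
  "cnbrs N E i = insert i (nbrs N E i)"

definition mdeg :: "nat \<Rightarrow> nat set set \<Rightarrow> nat \<Rightarrow> nat" where
  "mdeg N E i = card (nbrs N E i) + 1"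

definition mtot :: "nat \<Rightarrow> nat set set \<Rightarrow> nat" where
  "mtot N E = (\<Sum>i = 1..N. mdeg N E i)"

text \<open>B = A + I, the adjacency matrix plus identity (entries indexed by vertices).\<close>
definition Bent :: "nat \<Rightarrow> nat set set \<Rightarrow> nat \<Rightarrow> nat \<Rightarrow> nat" where
  "Bent N E i l = (if l \<in> cnbrs N E i then 1 else 0)"

definition sidx :: "nat \<Rightarrow> nat set set \<Rightarrow> nat \<Rightarrow> nat \<Rightarrow> nat" where
  "sidx N E i j = (\<Sum>l = 1..j. Bent N E i l) + (\<Sum>r = 1..<i. mdeg N E r)"

text \<open>E^i_j = e_{s_ij} (1-based basis vector of R^m, stored 0-based) or the zero vector.\<close>
definition Evec :: "nat \<Rightarrow> nat set set \<Rightarrow> nat \<Rightarrow> nat \<Rightarrow> real vec" where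
  "Evec N E i j = (if j \<in> cnbrs N E i then unit_vec (mtot N E) (sidx N E i j - 1)
                   else 0\<^sub>v (mtot N E))"

definition Hmat :: "nat \<Rightarrow> nat set set \<Rightarrow> real mat" where
  "Hmat N E = mat (mtot N E) N (\<lambda>(r, c). \<Sum>i = 1..N. Evec N E i (c + 1) $ r)"

definition Hbar :: "nat \<Rightarrow> nat set set \<Rightarrow> real mat" where
  "Hbar N E = mat N (mtot N E) (\<lambda>(r, c). (1 / real (mdeg N E (r + 1))) * Hmat N E $$ (c, r))"

definition ind :: "nat \<Rightarrow> nat set set \<Rightarrow> nat \<Rightarrow> nat \<Rightarrow> nat set" where
  "ind N E i j = cnbrs N E i \<inter> cnbrs N E j"

definition Wmat :: "nat \<Rightarrow> nat set set \<Rightarrow> nat \<Rightarrow> nat \<Rightarrow> real mat" where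
  "Wmat N E i j = 1\<^sub>m (mtot N E) - (1 / 2) \<cdot>\<^sub>m
     mat (mtot N E) (mtot N E) (\<lambda>(r, c). \<Sum>l \<in> ind N E i j.
        (Evec N E i l - Evec N E j l) $ r * (Evec N E i l - Evec N E j l) $ c)"

text \<open>Expectation of a matrix-valued function F(i_k, j_k) of the random pair, where i_k is
  uniform on V and j_k is uniform on N_C(i_k). The matrices are n x n.\<close>
definition expect :: "nat \<Rightarrow> nat set set \<Rightarrow> nat \<Rightarrow> (nat \<Rightarrow> nat \<Rightarrow> real mat) \<Rightarrow> real mat" where
  "expect N EC n F = mat n n (\<lambda>(r, c).
     \<Sum>i = 1..N. \<Sum>j \<in> nbrs N EC i. (1 / real N) * (1 / real (card (nbrs N EC i))) * F i j $$ (r, c))"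

definition Qmat :: "nat \<Rightarrow> nat set set \<Rightarrow> nat \<Rightarrow> nat \<Rightarrow> real mat" where
  "Qmat N E i j = Wmat N E i j - Hmat N E * Hbar N E * Wmat N E i j"

definition doubly_stochastic :: "real mat \<Rightarrow> bool" where
  "doubly_stochastic A \<longleftrightarrow> dim_row A = dim_col A \<and>
     (\<forall>r < dim_row A. \<forall>c < dim_col A. A $$ (r, c) \<ge> 0) \<and>
     (\<forall>r < dim_row A. (\<Sum>c < dim_col A. A $$ (r, c)) = 1) \<and>
     (\<forall>c < dim_col A. (\<Sum>r < dim_row A. A $$ (r, c)) = 1)"

definition lambda_max :: "real mat \<Rightarrow> real" where
  "lambda_max A = Max {k. eigenvalue A k}"

definition lambda_2 :: "real mat \<Rightarrow> real" where
  "lambda_2 A = Max {k. eigenvalue A k \<and> k \<noteq> 1}"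

end

theory Submission
  imports Defs "Jordan_Normal_Form.Schur_Decomposition"
begin

(*
  Coordinates of R^m are the pairs (i, l) with l in the closed neighbourhood of i: agent i's copy
  of the state of agent l. For an edge {i, j}, W_ij averages the copies (i, l) and (j, l) of every
  common neighbour l, so W_ij = (I + S)/2 for a label-preserving involutive permutation S, while
  H Hbar = P averages all copies carrying the same label. Hence Wbar = E[W(k)] is a convex
  combination of symmetric doubly stochastic idempotents: it is doubly stochastic, its spectrum
  lies in [0, 1], it fixes the all-ones vector, and P Wbar = Wbar P = P. As P W_ij = P, we get
  Q = W - P and Q^T Q = W - P, so E[Q^T Q] = Wbar - P.

  A fixed vector of Wbar is fixed by every swap that occurs. Every edge of G_I lies in G_C or
  closes a triangle of G_m, so all copies of a label must agree: the fixed space of Wbar is the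
  range of P. Therefore the spectrum of Wbar - P consists of 0 and the eigenvalues of Wbar other
  than 1. Finally Wbar differs from P, and a nonzero real symmetric matrix has a nonzero
  eigenvalue, so there are eigenvalues other than 1, and lambda_2(Wbar) is the largest
  eigenvalue of Wbar - P.
*)

section \<open>Real symmetric matrices\<close>

lemma eigenvalue_of_real_symmetric_mat_real:
  fixes A :: "real mat"
  assumes A: "A \<in> carrier_mat n n" and sym: "A\<^sup>T = A"
    and ev: "eigenvalue (map_mat complex_of_real A) a"
  shows "a \<in> \<real>"
proof -
  let ?C = "map_mat complex_of_real A"
  have C: "?C \<in> carrier_mat n n" using A by simp
  have symC: "?C\<^sup>T = ?C" using A sym by (metis map_mat_transpose)
  obtain z where z: "z \<in> carrier_vec n" "z \<noteq> 0\<^sub>v n" "?C *\<^sub>v z = a \<cdot>\<^sub>v z"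
    using ev A unfolding eigenvalue_def eigenvector_def by auto
  have conj: "conjugate (?C *\<^sub>v z) = ?C *\<^sub>v conjugate z"
    by (rule eq_vecI) (use A z(1) in \<open>auto simp: scalar_prod_def\<close>)
  have "a * (z \<bullet>c z) = (?C *\<^sub>v z) \<bullet>c z" using z by simp
  also have "\<dots> = z \<bullet> (?C *\<^sub>v conjugate z)"
    using transpose_vec_mult_scalar[OF C, of "conjugate z" z] symC z(1) by simp
  also have "\<dots> = cnj a * (z \<bullet>c z)"
    unfolding conj[symmetric] z(3) conjugate_smult_vec using z(1) by simp
  finally have "a = cnj a" using z(1,2) by simp
  then show ?thesis by (simp add: Reals_cnj_iff)
qed

lemma pow_strictly_upper_triangular_mat:
  fixes B :: "'a :: comm_ring_1 mat"
  assumes B: "B \<in> carrier_mat n n"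
    and su: "\<And>i j. i < n \<Longrightarrow> j < n \<Longrightarrow> j \<le> i \<Longrightarrow> B $$ (i,j) = 0"
  shows "i < n \<Longrightarrow> j < n \<Longrightarrow> j < i + k \<Longrightarrow> (B ^\<^sub>m k) $$ (i,j) = 0"
proof (induction k arbitrary: j)
  case 0
  then show ?case using B by simp
next
  case (Suc k)
  have "(B ^\<^sub>m Suc k) $$ (i,j) = (\<Sum>l\<in>{0..<n}. (B ^\<^sub>m k) $$ (i,l) * B $$ (l,j))"
    using Suc.prems B by (simp add: scalar_prod_def)
  also have "\<dots> = 0"
  proof (rule sum.neutral, rule ballI)
    fix l assume "l \<in> {0..<n}"
    then show "(B ^\<^sub>m k) $$ (i,l) * B $$ (l,j) = 0"
      using Suc su[of l j] by (cases "l < i + k") auto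
  qed
  finally show ?case .
qed

lemma nilpotent_if_eigenvalues_0:
  fixes C :: "complex mat"
  assumes C: "C \<in> carrier_mat n n" and ev0: "\<And>a. eigenvalue C a \<Longrightarrow> a = 0"
  shows "C ^\<^sub>m n = 0\<^sub>m n n"
proof -
  obtain es where cp: "char_poly C = (\<Prod>a\<leftarrow>es. [:- a, 1:])"
    using char_poly_factorized[OF C] by blast
  have es0: "a = 0" if "a \<in> set es" for a
  proof -
    have "poly (char_poly C) a = 0" unfolding cp using that
      by (induction es) auto
    then show ?thesis using ev0 eigenvalue_root_char_poly[OF C] by blast
  qed
  obtain B P Q where sd: "schur_decomposition C es = (B,P,Q)"
    by (cases "schur_decomposition C es") auto
  have sim: "similar_mat_wit C B P Q" and ut: "upper_triangular B" and diag: "diag_mat B = es"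
    using schur_decomposition[OF C cp sd] by auto
  have BPQ: "B \<in> carrier_mat n n" "P \<in> carrier_mat n n" "Q \<in> carrier_mat n n"
    using similar_mat_witD2[OF C sim] by auto
  have su: "B $$ (i,j) = 0" if "i < n" "j < n" "j \<le> i" for i j
  proof (cases "j = i")
    case True
    have "B $$ (i,i) \<in> set (diag_mat B)" using that BPQ unfolding diag_mat_def by auto
    then show ?thesis using es0 True diag by blast
  next
    case False
    then show ?thesis using ut that BPQ by auto
  qed
  have "B ^\<^sub>m n = 0\<^sub>m n n"
    by (rule eq_matI) (use pow_strictly_upper_triangular_mat[OF BPQ(1) su] BPQ(1) in auto)
  then show ?thesis using similar_mat_wit_pow_id[OF sim, of n] BPQ by simp
qed

lemma symmetric_mat_pow_mult_vec_eq_0: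
  fixes A :: "real mat"
  assumes A: "A \<in> carrier_mat n n" and sym: "A\<^sup>T = A"
  shows "v \<in> carrier_vec n \<Longrightarrow> (A ^\<^sub>m Suc k) *\<^sub>v v = 0\<^sub>v n \<Longrightarrow> A *\<^sub>v v = 0\<^sub>v n"
proof (induction k arbitrary: v)
  case 0
  then show ?case using A by simp
next
  case (Suc k)
  have Av: "A *\<^sub>v v \<in> carrier_vec n" using A Suc.prems(1) by simp
  have "(A ^\<^sub>m Suc k) *\<^sub>v (A *\<^sub>v v) = (A ^\<^sub>m Suc (Suc k)) *\<^sub>v v"
    using assoc_mult_mat_vec[OF pow_carrier_mat[OF A] A Suc.prems(1), of "Suc k"] by simp
  then have AAv: "A *\<^sub>v (A *\<^sub>v v) = 0\<^sub>v n" using Suc.IH[OF Av] Suc.prems(2) by simp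
  have "(A *\<^sub>v v) \<bullet> (A *\<^sub>v v) = v \<bullet> (A *\<^sub>v (A *\<^sub>v v))"
    using transpose_vec_mult_scalar[OF A Av Suc.prems(1)] sym by simp
  also have "\<dots> = 0" unfolding AAv using Suc.prems(1) by simp
  finally show ?case using conjugate_square_eq_0_vec[OF Av] by simp
qed

lemma zero_mult_mat_vec: "v \<in> carrier_vec n \<Longrightarrow> 0\<^sub>m m n *\<^sub>v v = 0\<^sub>v m"
  by (rule eq_vecI) (auto simp: scalar_prod_def)

lemma symmetric_mat_eq_0_if_nilpotent:
  fixes A :: "real mat"
  assumes A: "A \<in> carrier_mat n n" and sym: "A\<^sup>T = A" and pow: "A ^\<^sub>m n = 0\<^sub>m n n"
  shows "A = 0\<^sub>m n n"
proof -
  have Av: "A *\<^sub>v v = 0\<^sub>v n" if v: "v \<in> carrier_vec n" for v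
  proof (cases n)
    case 0
    then show ?thesis using A v by (auto intro!: eq_vecI)
  next
    case (Suc k)
    have "(A ^\<^sub>m n) *\<^sub>v v = 0\<^sub>v n" using pow zero_mult_mat_vec[OF v] by simp
    then show ?thesis
      by (intro symmetric_mat_pow_mult_vec_eq_0[OF A sym v, of k]) (simp only: Suc[symmetric])
  qed
  show ?thesis
  proof (rule eq_matI)
    fix i j assume "i < dim_row (0\<^sub>m n n :: real mat)" "j < dim_col (0\<^sub>m n n :: real mat)"
    then show "A $$ (i, j) = 0\<^sub>m n n $$ (i, j)"
      using Av[of "unit_vec n j"] A by (auto dest: arg_cong[of _ _ "\<lambda>v. v $ i"])
  qed (use A in auto)
qed

lemma eigenvalue_of_real_mat_of_real:
  fixes A :: "real mat"
  assumes A: "A \<in> carrier_mat n n" and ev: "eigenvalue (map_mat complex_of_real A) (of_real k)"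
  shows "eigenvalue A k"
proof -
  have C: "map_mat complex_of_real A \<in> carrier_mat n n" using A by simp
  have "poly (char_poly (map_mat complex_of_real A)) (of_real k) = 0"
    using ev eigenvalue_root_char_poly[OF C] by simp
  then have "of_real (poly (char_poly A) k) = (0::complex)"
    using of_real_hom.char_poly_hom[OF A] of_real_hom.poly_map_poly by metis
  then show ?thesis using eigenvalue_root_char_poly[OF A] by simp
qed

lemma symmetric_mat_eq_0_if_eigenvalues_0:
  fixes A :: "real mat"
  assumes A: "A \<in> carrier_mat n n" and sym: "A\<^sup>T = A" and ev0: "\<And>k. eigenvalue A k \<Longrightarrow> k = 0"
  shows "A = 0\<^sub>m n n"
proof -
  let ?C = "map_mat complex_of_real A"
  have "a = 0" if eva: "eigenvalue ?C a" for a
  proof -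
    obtain k where a: "a = of_real k"
      using eigenvalue_of_real_symmetric_mat_real[OF A sym eva] by (auto elim: Reals_cases)
    then show ?thesis using ev0 eigenvalue_of_real_mat_of_real[OF A] eva by simp
  qed
  moreover have "?C \<in> carrier_mat n n" using A by simp
  ultimately have "?C ^\<^sub>m n = 0\<^sub>m n n" using nilpotent_if_eigenvalues_0 by blast
  then have "map_mat complex_of_real (A ^\<^sub>m n) = map_mat complex_of_real (0\<^sub>m n n)"
    by (auto simp: of_real_hom.mat_hom_pow[OF A] intro!: eq_matI)
  then have "A ^\<^sub>m n = 0\<^sub>m n n" by (rule of_real_hom.mat_hom_inj)
  then show ?thesis by (rule symmetric_mat_eq_0_if_nilpotent[OF A sym])
qed

lemma finite_eigenvalues:
  fixes A :: "'a :: field mat"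
  assumes A: "A \<in> carrier_mat n n"
  shows "finite {k. eigenvalue A k}"
proof -
  have "char_poly A \<noteq> 0" using degree_monic_char_poly[OF A] by auto
  then show ?thesis using poly_roots_finite eigenvalue_root_char_poly[OF A] by simp
qed

lemma mult_mat_vec_index_sum:
  "A \<in> carrier_mat n n \<Longrightarrow> x \<in> carrier_vec n \<Longrightarrow> r < n
    \<Longrightarrow> (A *\<^sub>v x) $ r = (\<Sum>k\<in>{0..<n}. A $$ (r, k) * x $ k)"
  by (simp add: scalar_prod_def)

lemma scalar_prod_index_sum:
  "y \<in> carrier_vec n \<Longrightarrow> x \<bullet> y = (\<Sum>r\<in>{0..<n}. x $ r * y $ r)"
  by (simp add: scalar_prod_def)

lemma zero_smult_vec:
  fixes v :: "'a :: semiring_0 vec"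
  shows "v \<in> carrier_vec n \<Longrightarrow> 0 \<cdot>\<^sub>v v = 0\<^sub>v n"
  by (rule eq_vecI) auto

lemma smult_vec_right_cancel:
  fixes y :: "'a :: field vec"
  assumes y: "y \<in> carrier_vec n" and eq: "a \<cdot>\<^sub>v y = b \<cdot>\<^sub>v y" and ab: "a \<noteq> b"
  shows "y = 0\<^sub>v n"
proof (rule eq_vecI)
  fix i assume i: "i < dim_vec (0\<^sub>v n)"
  then have "a * y $ i = b * y $ i" using arg_cong[OF eq, of "\<lambda>z. z $ i"] y by simp
  then show "y $ i = 0\<^sub>v n $ i" using ab i by simp
qed (use y in simp)

section \<open>Swap-averaging and block-averaging matrices\<close>

definition involution_below :: "nat \<Rightarrow> (nat \<Rightarrow> nat) \<Rightarrow> bool" where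
  "involution_below n f \<longleftrightarrow> (\<forall>r<n. f r < n \<and> f (f r) = r)"

definition swap_avg_mat :: "nat \<Rightarrow> (nat \<Rightarrow> nat) \<Rightarrow> real mat" where
  "swap_avg_mat n f = mat n n (\<lambda>(r, c). (of_bool (c = r) + of_bool (c = f r)) / 2)"

lemma swap_avg_mat_carrier [simp]: "swap_avg_mat n f \<in> carrier_mat n n"
  and dim_swap_avg_mat [simp]: "dim_row (swap_avg_mat n f) = n" "dim_col (swap_avg_mat n f) = n"
  unfolding swap_avg_mat_def by simp_all

lemma index_swap_avg_mat:
  "r < n \<Longrightarrow> c < n \<Longrightarrow> swap_avg_mat n f $$ (r, c) = (of_bool (c = r) + of_bool (c = f r)) / 2"
  unfolding swap_avg_mat_def by simp

lemma sum_of_bool_pair: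
  fixes g :: "nat \<Rightarrow> 'a :: comm_semiring_1"
  assumes "a < n" "b < n"
  shows "(\<Sum>k\<in>{0..<n}. (of_bool (k = a) + of_bool (k = b)) * g k) = g a + g b"
proof -
  have ab: "{0..<n} \<inter> {k. k = a} = {a}" "{0..<n} \<inter> {k. k = b} = {b}" using assms by auto
  have "(\<Sum>k\<in>{0..<n}. (of_bool (k = a) + of_bool (k = b)) * g k)
      = (\<Sum>k\<in>{0..<n}. of_bool (k = a) * g k) + (\<Sum>k\<in>{0..<n}. of_bool (k = b) * g k)"
    by (simp only: distrib_right sum.distrib)
  also have "\<dots> = sum g ({0..<n} \<inter> {k. k = a}) + sum g ({0..<n} \<inter> {k. k = b})"
    by (simp only: sum_of_bool_mult_eq finite_atLeastLessThan)
  finally show ?thesis unfolding ab by simp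
qed

lemma involution_belowD:
  "involution_below n f \<Longrightarrow> r < n \<Longrightarrow> f r < n \<and> f (f r) = r"
  unfolding involution_below_def by blast

lemma transpose_swap_avg_mat:
  assumes f: "involution_below n f"
  shows "(swap_avg_mat n f)\<^sup>T = swap_avg_mat n f"
proof (rule eq_matI)
  fix r c assume "r < dim_row (swap_avg_mat n f)" "c < dim_col (swap_avg_mat n f)"
  then have rc: "r < n" "c < n" by auto
  moreover have "(c = f r) = (r = f c)" using involution_belowD[OF f] rc by metis
  ultimately show "(swap_avg_mat n f)\<^sup>T $$ (r, c) = swap_avg_mat n f $$ (r, c)"
    by (simp add: index_swap_avg_mat)
qed auto

lemma swap_avg_mat_mult_vec:
  assumes f: "involution_below n f" and x: "x \<in> carrier_vec n" and r: "r < n"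
  shows "(swap_avg_mat n f *\<^sub>v x) $ r = (x $ r + x $ f r) / 2"
proof -
  have "(swap_avg_mat n f *\<^sub>v x) $ r = (\<Sum>k\<in>{0..<n}. swap_avg_mat n f $$ (r, k) * x $ k)"
    using r x by (simp add: scalar_prod_def)
  also have "\<dots> = (\<Sum>k\<in>{0..<n}. (of_bool (k = r) + of_bool (k = f r)) * (x $ k / 2))"
    by (rule sum.cong[OF refl]) (use r in \<open>simp add: index_swap_avg_mat\<close>)
  also have "\<dots> = x $ r / 2 + x $ f r / 2"
    by (rule sum_of_bool_pair[OF r conjunct1[OF involution_belowD[OF f r]]])
  finally show ?thesis by simp
qed

lemma swap_avg_mat_idem:
  assumes f: "involution_below n f"
  shows "swap_avg_mat n f * swap_avg_mat n f = swap_avg_mat n f"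
proof (rule eq_matI)
  fix r c assume "r < dim_row (swap_avg_mat n f)" "c < dim_col (swap_avg_mat n f)"
  then have r: "r < n" and c: "c < n" by auto
  have fr: "f r < n" "f (f r) = r" using involution_belowD[OF f r] by auto
  let ?S = "swap_avg_mat n f"
  have "(?S * ?S) $$ (r, c) = (\<Sum>k\<in>{0..<n}. ?S $$ (r, k) * ?S $$ (k, c))"
    using r c by (simp add: scalar_prod_def)
  also have "\<dots> = (\<Sum>k\<in>{0..<n}. (of_bool (k = r) + of_bool (k = f r)) * (?S $$ (k, c) / 2))"
    by (rule sum.cong[OF refl]) (use r in \<open>simp add: index_swap_avg_mat\<close>)
  also have "\<dots> = ?S $$ (r, c) / 2 + ?S $$ (f r, c) / 2"
    by (rule sum_of_bool_pair[OF r fr(1)])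
  also have "\<dots> = ?S $$ (r, c)"
    using r c fr by (auto simp: index_swap_avg_mat)
  finally show "(?S * ?S) $$ (r, c) = ?S $$ (r, c)" .
qed auto

lemma swap_avg_mat_row_sum:
  assumes f: "involution_below n f" and r: "r < n"
  shows "(\<Sum>c\<in>{0..<n}. swap_avg_mat n f $$ (r, c)) = 1"
proof -
  have "(\<Sum>c\<in>{0..<n}. swap_avg_mat n f $$ (r, c))
      = (\<Sum>c\<in>{0..<n}. (of_bool (c = r) + of_bool (c = f r)) * (1 / 2))"
    by (rule sum.cong[OF refl]) (use r in \<open>simp add: index_swap_avg_mat\<close>)
  also have "\<dots> = 1 / 2 + 1 / 2"
    by (rule sum_of_bool_pair[OF r conjunct1[OF involution_belowD[OF f r]]])
  finally show ?thesis by simp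
qed

lemma sum_reindex_involution:
  assumes "involution_below n f"
  shows "(\<Sum>r\<in>{0..<n}. g (f r)) = (\<Sum>r\<in>{0..<n}. g r)"
proof -
  have "bij_betw f {0..<n} {0..<n}"
  proof (rule bij_betw_byWitness[of _ f])
    show "\<forall>a\<in>{0..<n}. f (f a) = a" "f ` {0..<n} \<subseteq> {0..<n}"
      using assms unfolding involution_below_def by auto
  qed (use assms in \<open>auto simp: involution_below_def\<close>)
  then show ?thesis by (rule sum.reindex_bij_betw)
qed

lemma swap_avg_mat_quadratic_form:
  assumes f: "involution_below n f" and x: "x \<in> carrier_vec n"
  shows "4 * (x \<bullet> (swap_avg_mat n f *\<^sub>v x)) = (\<Sum>r\<in>{0..<n}. (x $ r + x $ f r)\<^sup>2)"
    and "4 * (x \<bullet> x - x \<bullet> (swap_avg_mat n f *\<^sub>v x)) = (\<Sum>r\<in>{0..<n}. (x $ r - x $ f r)\<^sup>2)"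
proof -
  define q where "q = (\<Sum>r\<in>{0..<n}. (x $ r)\<^sup>2)"
  define s where "s = (\<Sum>r\<in>{0..<n}. x $ r * x $ f r)"
  have q': "(\<Sum>r\<in>{0..<n}. (x $ f r)\<^sup>2) = q"
    unfolding q_def by (rule sum_reindex_involution[OF f])
  have xx: "x \<bullet> x = q" using x unfolding q_def by (simp add: scalar_prod_def power2_eq_square)
  have "x \<bullet> (swap_avg_mat n f *\<^sub>v x) = (\<Sum>r\<in>{0..<n}. x $ r * (swap_avg_mat n f *\<^sub>v x) $ r)"
    unfolding scalar_prod_def by (simp del: index_mult_mat_vec)
  also have "\<dots> = (\<Sum>r\<in>{0..<n}. x $ r * ((x $ r + x $ f r) / 2))"
    by (rule sum.cong[OF refl]) (simp add: swap_avg_mat_mult_vec[OF f x] del: index_mult_mat_vec)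
  also have "\<dots> = (\<Sum>r\<in>{0..<n}. ((x $ r)\<^sup>2 + x $ r * x $ f r) / 2)"
    by (rule sum.cong) (auto simp: power2_eq_square field_simps)
  also have "\<dots> = (q + s) / 2"
    unfolding q_def s_def sum_divide_distrib[symmetric] sum.distrib ..
  finally have xSx: "x \<bullet> (swap_avg_mat n f *\<^sub>v x) = (q + s) / 2" .
  have "(\<Sum>r\<in>{0..<n}. (x $ r + x $ f r)\<^sup>2)
      = (\<Sum>r\<in>{0..<n}. (x $ r)\<^sup>2 + 2 * (x $ r * x $ f r) + (x $ f r)\<^sup>2)"
    by (rule sum.cong) (auto simp: power2_sum)
  also have "\<dots> = q + 2 * s + (\<Sum>r\<in>{0..<n}. (x $ f r)\<^sup>2)"
    unfolding q_def s_def sum.distrib sum_distrib_left ..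
  finally show "4 * (x \<bullet> (swap_avg_mat n f *\<^sub>v x)) = (\<Sum>r\<in>{0..<n}. (x $ r + x $ f r)\<^sup>2)"
    using xSx q' by simp
  have "(\<Sum>r\<in>{0..<n}. (x $ r - x $ f r)\<^sup>2)
      = (\<Sum>r\<in>{0..<n}. (x $ r)\<^sup>2 - 2 * (x $ r * x $ f r) + (x $ f r)\<^sup>2)"
    by (rule sum.cong) (auto simp: power2_diff)
  also have "\<dots> = q - 2 * s + (\<Sum>r\<in>{0..<n}. (x $ f r)\<^sup>2)"
    unfolding q_def s_def sum.distrib sum_subtractf sum_distrib_left ..
  finally show "4 * (x \<bullet> x - x \<bullet> (swap_avg_mat n f *\<^sub>v x)) = (\<Sum>r\<in>{0..<n}. (x $ r - x $ f r)\<^sup>2)"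
    using xSx xx q' by simp
qed

definition block_constant :: "nat \<Rightarrow> (nat \<Rightarrow> 'a) \<Rightarrow> real vec \<Rightarrow> bool" where
  "block_constant n g x \<longleftrightarrow> (\<forall>r<n. \<forall>c<n. g r = g c \<longrightarrow> x $ r = x $ c)"

definition block_avg_mat :: "nat \<Rightarrow> (nat \<Rightarrow> 'a) \<Rightarrow> real mat" where
  "block_avg_mat n g = mat n n (\<lambda>(r, c).
     if g r = g c then 1 / real (card {k \<in> {0..<n}. g k = g r}) else 0)"

lemma block_avg_mat_carrier [simp]: "block_avg_mat n g \<in> carrier_mat n n"
  and dim_block_avg_mat [simp]: "dim_row (block_avg_mat n g) = n" "dim_col (block_avg_mat n g) = n"
  unfolding block_avg_mat_def by simp_all

lemma index_block_avg_mat: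
  "r < n \<Longrightarrow> c < n \<Longrightarrow> block_avg_mat n g $$ (r, c)
     = (if g r = g c then 1 / real (card {k \<in> {0..<n}. g k = g r}) else 0)"
  unfolding block_avg_mat_def by simp

lemma transpose_block_avg_mat: "(block_avg_mat n g)\<^sup>T = block_avg_mat n g"
  by (rule eq_matI) (auto simp: index_block_avg_mat)

lemma block_constantD:
  "block_constant n g x \<Longrightarrow> r < n \<Longrightarrow> c < n \<Longrightarrow> g r = g c \<Longrightarrow> x $ r = x $ c"
  unfolding block_constant_def by blast

lemma block_constant_col_block_avg_mat:
  assumes "c < n"
  shows "block_constant n g (col (block_avg_mat n g) c)"
  using assms unfolding block_constant_def by (simp add: index_block_avg_mat)

lemma block_avg_mat_mult_vec_block_constant:
  assumes x: "x \<in> carrier_vec n" and bc: "block_constant n g x"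
  shows "block_avg_mat n g *\<^sub>v x = x"
proof (rule eq_vecI)
  fix r assume "r < dim_vec x"
  then have r: "r < n" using x by simp
  let ?B = "{k \<in> {0..<n}. g k = g r}"
  have "r \<in> ?B" using r by simp
  then have card: "0 < card ?B" by (intro card_gt_0_iff[THEN iffD2]) auto
  have "(block_avg_mat n g *\<^sub>v x) $ r = (\<Sum>k\<in>{0..<n}. block_avg_mat n g $$ (r, k) * x $ k)"
    using r x by (simp add: scalar_prod_def)
  also have "\<dots> = (\<Sum>k\<in>{0..<n}. if g k = g r then x $ r / real (card ?B) else 0)"
  proof (rule sum.cong[OF refl])
    fix k assume k: "k \<in> {0..<n}"
    then have "g k = g r \<Longrightarrow> x $ k = x $ r" using block_constantD[OF bc, of k r] r by simp
    then show "block_avg_mat n g $$ (r, k) * x $ k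
        = (if g k = g r then x $ r / real (card ?B) else 0)"
      using r k by (auto simp: index_block_avg_mat)
  qed
  also have "\<dots> = (\<Sum>k\<in>?B. x $ r / real (card ?B))"
    by (rule sum.inter_filter[symmetric]) simp
  also have "\<dots> = x $ r" using card r by auto
  finally show "(block_avg_mat n g *\<^sub>v x) $ r = x $ r" .
qed (use x in simp)

lemma block_avg_mat_idem: "block_avg_mat n g * block_avg_mat n g = block_avg_mat n g"
proof (rule eq_matI)
  fix r c assume "r < dim_row (block_avg_mat n g)" "c < dim_col (block_avg_mat n g)"
  then have r: "r < n" and c: "c < n" by auto
  have Pc: "block_avg_mat n g *\<^sub>v col (block_avg_mat n g) c = col (block_avg_mat n g) c"
    by (rule block_avg_mat_mult_vec_block_constant[OF carrier_vecI
          block_constant_col_block_avg_mat[OF c]]) simp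
  have "(block_avg_mat n g * block_avg_mat n g) $$ (r, c)
      = (block_avg_mat n g *\<^sub>v col (block_avg_mat n g) c) $ r"
    using r c by simp
  also have "\<dots> = block_avg_mat n g $$ (r, c)" unfolding Pc using r c by simp
  finally show "(block_avg_mat n g * block_avg_mat n g) $$ (r, c) = block_avg_mat n g $$ (r, c)" .
qed auto

lemma swap_avg_mat_mult_block_avg_mat:
  assumes f: "involution_below n f" and fg: "\<And>r. r < n \<Longrightarrow> g (f r) = g r"
  shows "swap_avg_mat n f * block_avg_mat n g = block_avg_mat n g"
proof (rule eq_matI)
  fix r c assume "r < dim_row (block_avg_mat n g)" "c < dim_col (block_avg_mat n g)"
  then have r: "r < n" and c: "c < n" by auto
  have fr: "f r < n" using involution_belowD[OF f r] by simp
  have "(swap_avg_mat n f * block_avg_mat n g) $$ (r, c)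
      = (swap_avg_mat n f *\<^sub>v col (block_avg_mat n g) c) $ r"
    using r c by simp
  also have "\<dots> = (block_avg_mat n g $$ (r, c) + block_avg_mat n g $$ (f r, c)) / 2"
    using swap_avg_mat_mult_vec[OF f _ r, of "col (block_avg_mat n g) c"] r c fr by simp
  also have "\<dots> = block_avg_mat n g $$ (r, c)"
    using block_constant_col_block_avg_mat[OF c] r c fr fg[OF r]
    unfolding block_constant_def by auto
  finally show "(swap_avg_mat n f * block_avg_mat n g) $$ (r, c) = block_avg_mat n g $$ (r, c)" .
qed auto

lemma block_avg_mat_mult_swap_avg_mat:
  assumes f: "involution_below n f" and fg: "\<And>r. r < n \<Longrightarrow> g (f r) = g r"
  shows "block_avg_mat n g * swap_avg_mat n f = block_avg_mat n g"
proof -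
  have "block_avg_mat n g * swap_avg_mat n f = (swap_avg_mat n f * block_avg_mat n g)\<^sup>T"
    by (simp add: transpose_mult[OF swap_avg_mat_carrier block_avg_mat_carrier]
        transpose_swap_avg_mat[OF f] transpose_block_avg_mat)
  then show ?thesis
    by (simp add: swap_avg_mat_mult_block_avg_mat[where g = g, OF f fg] transpose_block_avg_mat)
qed

lemma swap_avg_minus_block_avg_gram:
  assumes f: "involution_below n f" and fg: "\<And>r. r < n \<Longrightarrow> g (f r) = g r"
  defines "D \<equiv> swap_avg_mat n f - block_avg_mat n g"
  shows "D\<^sup>T * D = D"
proof -
  let ?S = "swap_avg_mat n f" and ?P = "block_avg_mat n g"
  have S: "?S \<in> carrier_mat n n" and P: "?P \<in> carrier_mat n n" by simp_all
  have DT: "D\<^sup>T = D"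
    unfolding D_def
    by (simp add: transpose_minus[OF S P] transpose_swap_avg_mat[OF f] transpose_block_avg_mat)
  have DS: "?S - ?P \<in> carrier_mat n n" by (rule minus_carrier_mat[OF P])
  have "D * D = D * ?S - D * ?P"
    unfolding D_def by (rule mult_minus_distrib_mat[OF DS S P])
  also have "\<dots> = (?S * ?S - ?P * ?S) - (?S * ?P - ?P * ?P)"
    unfolding D_def minus_mult_distrib_mat[OF S P S] minus_mult_distrib_mat[OF S P P] ..
  also have "\<dots> = ?S - ?P - (?P - ?P)"
    by (simp only: swap_avg_mat_idem[OF f] block_avg_mat_mult_swap_avg_mat[where g = g, OF f fg]
        swap_avg_mat_mult_block_avg_mat[where g = g, OF f fg] block_avg_mat_idem)
  also have "\<dots> = D" unfolding D_def by (rule eq_matI) auto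
  finally show ?thesis unfolding DT .
qed

lemma swap_avg_mat_quadratic_bounds:
  assumes f: "involution_below n f" and x: "x \<in> carrier_vec n"
  shows "0 \<le> x \<bullet> (swap_avg_mat n f *\<^sub>v x)" "x \<bullet> (swap_avg_mat n f *\<^sub>v x) \<le> x \<bullet> x"
proof -
  have "0 \<le> (\<Sum>r\<in>{0..<n}. (x $ r + x $ f r)\<^sup>2)" by (simp add: sum_nonneg)
  then show "0 \<le> x \<bullet> (swap_avg_mat n f *\<^sub>v x)"
    using swap_avg_mat_quadratic_form(1)[OF f x] by linarith
  have "0 \<le> (\<Sum>r\<in>{0..<n}. (x $ r - x $ f r)\<^sup>2)" by (simp add: sum_nonneg)
  then have "0 \<le> 4 * (x \<bullet> x - x \<bullet> (swap_avg_mat n f *\<^sub>v x))"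
    by (simp only: swap_avg_mat_quadratic_form(2)[OF f x])
  then show "x \<bullet> (swap_avg_mat n f *\<^sub>v x) \<le> x \<bullet> x" by simp
qed

section \<open>Convex combinations of swap-averaging matrices\<close>

locale swap_mixture =
  fixes n :: nat and g :: "nat \<Rightarrow> 'a" and I :: "'i set" and w :: "'i \<Rightarrow> real"
    and \<sigma> :: "'i \<Rightarrow> nat \<Rightarrow> nat"
  assumes n_pos: "0 < n"
    and finite_I: "finite I"
    and w_pos: "i \<in> I \<Longrightarrow> 0 < w i"
    and sum_w: "sum w I = 1"
    and involution_\<sigma>: "i \<in> I \<Longrightarrow> involution_below n (\<sigma> i)"
    and \<sigma>_preserves_blocks: "i \<in> I \<Longrightarrow> r < n \<Longrightarrow> g (\<sigma> i r) = g r"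
begin

definition mixture :: "('i \<Rightarrow> real mat) \<Rightarrow> real mat" where
  "mixture F = mat n n (\<lambda>(r, c). \<Sum>i\<in>I. w i * F i $$ (r, c))"

abbreviation Wbar :: "real mat" where
  "Wbar \<equiv> mixture (\<lambda>i. swap_avg_mat n (\<sigma> i))"

abbreviation P :: "real mat" where
  "P \<equiv> block_avg_mat n g"

lemma mixture_carrier [simp]: "mixture F \<in> carrier_mat n n"
  and dim_mixture [simp]: "dim_row (mixture F) = n" "dim_col (mixture F) = n"
  unfolding mixture_def by simp_all

lemma index_mixture:
  "r < n \<Longrightarrow> c < n \<Longrightarrow> mixture F $$ (r, c) = (\<Sum>i\<in>I. w i * F i $$ (r, c))"
  unfolding mixture_def by simp

lemma mixture_cong: "(\<And>i. i \<in> I \<Longrightarrow> F i = G i) \<Longrightarrow> mixture F = mixture G"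
  unfolding mixture_def by (simp cong: sum.cong)

lemma mixture_const: "B \<in> carrier_mat n n \<Longrightarrow> mixture (\<lambda>i. B) = B"
  by (rule eq_matI) (simp_all add: index_mixture sum_distrib_right[symmetric] sum_w)

lemma mixture_minus:
  assumes "\<And>i. i \<in> I \<Longrightarrow> F i \<in> carrier_mat n n" "\<And>i. i \<in> I \<Longrightarrow> G i \<in> carrier_mat n n"
  shows "mixture (\<lambda>i. F i - G i) = mixture F - mixture G"
proof (rule eq_matI)
  fix r c assume "r < dim_row (mixture F - mixture G)" "c < dim_col (mixture F - mixture G)"
  then have r: "r < n" and c: "c < n" by auto
  have "(\<Sum>i\<in>I. w i * (F i - G i) $$ (r, c)) = (\<Sum>i\<in>I. w i * F i $$ (r, c) - w i * G i $$ (r, c))"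
  proof (rule sum.cong[OF refl])
    fix i assume "i \<in> I"
    then show "w i * (F i - G i) $$ (r, c) = w i * F i $$ (r, c) - w i * G i $$ (r, c)"
      using assms(1)[OF \<open>i \<in> I\<close>] assms(2)[OF \<open>i \<in> I\<close>] r c by (simp add: right_diff_distrib)
  qed
  then show "mixture (\<lambda>i. F i - G i) $$ (r, c) = (mixture F - mixture G) $$ (r, c)"
    using r c by (simp add: index_mixture sum_subtractf)
qed auto

lemma mult_mixture:
  assumes A: "A \<in> carrier_mat n n" and F: "\<And>i. i \<in> I \<Longrightarrow> F i \<in> carrier_mat n n"
  shows "A * mixture F = mixture (\<lambda>i. A * F i)"
proof (rule eq_matI)
  fix r c assume "r < dim_row (mixture (\<lambda>i. A * F i))" "c < dim_col (mixture (\<lambda>i. A * F i))"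
  then have r: "r < n" and c: "c < n" by auto
  have "(A * mixture F) $$ (r, c) = (\<Sum>k\<in>{0..<n}. A $$ (r, k) * (\<Sum>i\<in>I. w i * F i $$ (k, c)))"
    using A r c by (simp add: scalar_prod_def index_mixture)
  also have "\<dots> = (\<Sum>i\<in>I. w i * (\<Sum>k\<in>{0..<n}. A $$ (r, k) * F i $$ (k, c)))"
    by (simp add: sum_distrib_left sum.swap[of _ I] mult.left_commute)
  also have "\<dots> = mixture (\<lambda>i. A * F i) $$ (r, c)"
    unfolding index_mixture[OF r c]
  proof (rule sum.cong[OF refl])
    fix i assume "i \<in> I"
    then show "w i * (\<Sum>k\<in>{0..<n}. A $$ (r, k) * F i $$ (k, c)) = w i * (A * F i) $$ (r, c)"
      using A F[OF \<open>i \<in> I\<close>] r c by (simp add: scalar_prod_def)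
  qed
  finally show "(A * mixture F) $$ (r, c) = mixture (\<lambda>i. A * F i) $$ (r, c)" .
qed (use A in auto)

lemma mixture_mult_vec:
  assumes F: "\<And>i. i \<in> I \<Longrightarrow> F i \<in> carrier_mat n n" and x: "x \<in> carrier_vec n" and r: "r < n"
  shows "(mixture F *\<^sub>v x) $ r = (\<Sum>i\<in>I. w i * (F i *\<^sub>v x) $ r)"
proof -
  have "(mixture F *\<^sub>v x) $ r = (\<Sum>k\<in>{0..<n}. (\<Sum>i\<in>I. w i * F i $$ (r, k)) * x $ k)"
    by (subst mult_mat_vec_index_sum[OF mixture_carrier x r]) (simp add: index_mixture r)
  also have "\<dots> = (\<Sum>i\<in>I. w i * (\<Sum>k\<in>{0..<n}. F i $$ (r, k) * x $ k))"
    by (simp add: sum_distrib_left sum_distrib_right sum.swap[of _ I] mult.assoc)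
  also have "\<dots> = (\<Sum>i\<in>I. w i * (F i *\<^sub>v x) $ r)"
    by (rule sum.cong[OF refl]) (simp add: mult_mat_vec_index_sum[OF F x r])
  finally show ?thesis .
qed

lemma scalar_prod_mixture_mult_vec:
  assumes F: "\<And>i. i \<in> I \<Longrightarrow> F i \<in> carrier_mat n n" and x: "x \<in> carrier_vec n"
  shows "x \<bullet> (mixture F *\<^sub>v x) = (\<Sum>i\<in>I. w i * (x \<bullet> (F i *\<^sub>v x)))"
proof -
  have "x \<bullet> (mixture F *\<^sub>v x) = (\<Sum>r\<in>{0..<n}. x $ r * (\<Sum>i\<in>I. w i * (F i *\<^sub>v x) $ r))"
    by (subst scalar_prod_index_sum[of _ n])
      (simp_all add: mixture_mult_vec[OF F x] mult_mat_vec_carrier[OF mixture_carrier x]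
        del: index_mult_mat_vec)
  also have "\<dots> = (\<Sum>i\<in>I. w i * (\<Sum>r\<in>{0..<n}. x $ r * (F i *\<^sub>v x) $ r))"
    by (simp add: sum_distrib_left sum.swap[of _ I] mult.left_commute)
  also have "\<dots> = (\<Sum>i\<in>I. w i * (x \<bullet> (F i *\<^sub>v x)))"
    by (rule sum.cong[OF refl])
      (simp add: scalar_prod_index_sum[OF mult_mat_vec_carrier[OF F x]] del: index_mult_mat_vec)
  finally show ?thesis .
qed

lemma index_Wbar:
  "r < n \<Longrightarrow> c < n \<Longrightarrow> Wbar $$ (r, c) = (\<Sum>i\<in>I. w i * swap_avg_mat n (\<sigma> i) $$ (r, c))"
  by (rule index_mixture)

lemma transpose_Wbar: "Wbar\<^sup>T = Wbar"
proof (rule eq_matI)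
  fix r c assume "r < dim_row Wbar" "c < dim_col Wbar"
  then have r: "r < n" and c: "c < n" by auto
  have "swap_avg_mat n (\<sigma> i) $$ (c, r) = swap_avg_mat n (\<sigma> i) $$ (r, c)" if "i \<in> I" for i
    using arg_cong[OF transpose_swap_avg_mat[OF involution_\<sigma>[OF that]], of "\<lambda>A. A $$ (r, c)"] r c
    by simp
  then show "Wbar\<^sup>T $$ (r, c) = Wbar $$ (r, c)"
    using r c by (simp add: index_Wbar cong: sum.cong)
qed auto

lemma Wbar_symmetric: "r < n \<Longrightarrow> c < n \<Longrightarrow> Wbar $$ (c, r) = Wbar $$ (r, c)"
  using arg_cong[OF transpose_Wbar, of "\<lambda>A. A $$ (r, c)"] by simp

lemma Wbar_nonneg: "r < n \<Longrightarrow> c < n \<Longrightarrow> 0 \<le> Wbar $$ (r, c)"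
  unfolding index_Wbar using w_pos
  by (intro sum_nonneg mult_nonneg_nonneg) (auto simp: index_swap_avg_mat less_imp_le)

lemma Wbar_row_sum:
  assumes r: "r < n"
  shows "(\<Sum>c\<in>{0..<n}. Wbar $$ (r, c)) = 1"
proof -
  have "(\<Sum>c\<in>{0..<n}. Wbar $$ (r, c))
      = (\<Sum>i\<in>I. w i * (\<Sum>c\<in>{0..<n}. swap_avg_mat n (\<sigma> i) $$ (r, c)))"
    using r by (simp add: index_Wbar sum_distrib_left sum.swap[of _ I])
  also have "\<dots> = sum w I"
    by (rule sum.cong[OF refl]) (simp add: swap_avg_mat_row_sum[OF involution_\<sigma> r])
  finally show ?thesis using sum_w by simp
qed

lemma doubly_stochastic_Wbar: "doubly_stochastic Wbar"
proof -
  have "(\<Sum>r\<in>{0..<n}. Wbar $$ (r, c)) = (\<Sum>r\<in>{0..<n}. Wbar $$ (c, r))" if "c < n" for c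
    by (rule sum.cong[OF refl], rule Wbar_symmetric) (use that in auto)
  then have "(\<Sum>r\<in>{0..<n}. Wbar $$ (r, c)) = 1" if "c < n" for c
    using Wbar_row_sum[OF that] that by simp
  then show ?thesis
    unfolding doubly_stochastic_def using Wbar_nonneg Wbar_row_sum by (simp add: atLeast0LessThan)
qed

lemma scalar_prod_Wbar:
  "x \<in> carrier_vec n \<Longrightarrow> x \<bullet> (Wbar *\<^sub>v x) = (\<Sum>i\<in>I. w i * (x \<bullet> (swap_avg_mat n (\<sigma> i) *\<^sub>v x)))"
  by (rule scalar_prod_mixture_mult_vec) simp

lemma scalar_prod_defect_Wbar:
  assumes x: "x \<in> carrier_vec n"
  shows "x \<bullet> x - x \<bullet> (Wbar *\<^sub>v x)
    = (\<Sum>i\<in>I. w i * (x \<bullet> x - x \<bullet> (swap_avg_mat n (\<sigma> i) *\<^sub>v x)))"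
  using sum_w by (simp add: scalar_prod_Wbar[OF x] right_diff_distrib sum_subtractf
      sum_distrib_right[symmetric])

lemma eigenvalue_Wbar_bounds:
  assumes "eigenvalue Wbar k"
  shows "0 \<le> k" "k \<le> 1"
proof -
  obtain v where v: "v \<in> carrier_vec n" "v \<noteq> 0\<^sub>v n" "Wbar *\<^sub>v v = k \<cdot>\<^sub>v v"
    using assms unfolding eigenvalue_def eigenvector_def by auto
  have vv: "0 < v \<bullet> v" using conjugate_square_greater_0_vec[OF v(1)] v(2) by simp
  have "0 \<le> v \<bullet> (Wbar *\<^sub>v v)"
    unfolding scalar_prod_Wbar[OF v(1)]
    using w_pos swap_avg_mat_quadratic_bounds(1)[OF involution_\<sigma> v(1)]
    by (intro sum_nonneg mult_nonneg_nonneg) (auto simp: less_imp_le)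
  moreover have "0 \<le> v \<bullet> v - v \<bullet> (Wbar *\<^sub>v v)"
    unfolding scalar_prod_defect_Wbar[OF v(1)]
    using w_pos swap_avg_mat_quadratic_bounds(2)[OF involution_\<sigma> v(1)]
    by (intro sum_nonneg mult_nonneg_nonneg) (auto simp: less_imp_le)
  moreover have "v \<bullet> (Wbar *\<^sub>v v) = k * (v \<bullet> v)" using v by simp
  ultimately show "0 \<le> k" "k \<le> 1" using vv by (simp_all add: zero_le_mult_iff)
qed

lemma invariant_if_Wbar_fixed:
  assumes x: "x \<in> carrier_vec n" and fixed: "Wbar *\<^sub>v x = x" and i: "i \<in> I" and r: "r < n"
  shows "x $ \<sigma> i r = x $ r"
proof -
  let ?d = "\<lambda>i. x \<bullet> x - x \<bullet> (swap_avg_mat n (\<sigma> i) *\<^sub>v x)"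
  have nonneg: "0 \<le> w j * ?d j" if "j \<in> I" for j
    using w_pos[OF that] swap_avg_mat_quadratic_bounds(2)[OF involution_\<sigma>[OF that] x] by simp
  have "(\<Sum>j\<in>I. w j * ?d j) = 0" using scalar_prod_defect_Wbar[OF x] fixed by simp
  then have "\<forall>j\<in>I. w j * ?d j = 0"
    using sum_nonneg_eq_0_iff[OF finite_I, of "\<lambda>j. w j * ?d j"] nonneg by simp
  then have "w i * ?d i = 0" using i by blast
  then have "(\<Sum>s\<in>{0..<n}. (x $ s - x $ \<sigma> i s)\<^sup>2) = 0"
    using w_pos[OF i] swap_avg_mat_quadratic_form(2)[OF involution_\<sigma>[OF i] x] by simp
  then have "(x $ r - x $ \<sigma> i r)\<^sup>2 = 0"
    using sum_nonneg_eq_0_iff[of "{0..<n}" "\<lambda>s. (x $ s - x $ \<sigma> i s)\<^sup>2"] r by simp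
  then show ?thesis by simp
qed

lemma P_mult_Wbar: "P * Wbar = P"
proof -
  have "P * Wbar = mixture (\<lambda>i. P * swap_avg_mat n (\<sigma> i))" by (rule mult_mixture) simp_all
  also have "\<dots> = mixture (\<lambda>i. P)"
  proof -
    have "P * swap_avg_mat n (\<sigma> i) = P" if "i \<in> I" for i
      by (rule block_avg_mat_mult_swap_avg_mat[where g = g,
            OF involution_\<sigma>[OF that] \<sigma>_preserves_blocks[OF that]])
    then show ?thesis unfolding mixture_def by (simp cong: sum.cong)
  qed
  also have "\<dots> = P" by (rule mixture_const) simp
  finally show ?thesis .
qed

lemma mixture_swap_avg_minus_P: "mixture (\<lambda>i. swap_avg_mat n (\<sigma> i) - P) = Wbar - P"
  by (simp add: mixture_minus mixture_const)

abbreviation ones :: "real vec" where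
  "ones \<equiv> vec n (\<lambda>_. 1)"

lemma Wbar_mult_ones: "Wbar *\<^sub>v ones = ones"
proof (rule eq_vecI)
  fix r assume "r < dim_vec ones"
  then have r: "r < n" by simp
  have "(Wbar *\<^sub>v ones) $ r = (\<Sum>c\<in>{0..<n}. Wbar $$ (r, c))"
    by (subst mult_mat_vec_index_sum[OF mixture_carrier _ r]) (simp_all add: r)
  then show "(Wbar *\<^sub>v ones) $ r = ones $ r" using Wbar_row_sum[OF r] r by simp
qed simp

lemma ones_nonzero: "ones \<noteq> 0\<^sub>v n"
  using n_pos by (metis index_vec index_zero_vec(1) zero_neq_one)

lemma eigenvalue_Wbar_1: "eigenvalue Wbar 1"
  unfolding eigenvalue_def eigenvector_def using Wbar_mult_ones ones_nonzero
  by (auto intro!: exI[of _ ones])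

lemma lambda_max_Wbar: "lambda_max Wbar = 1"
  unfolding lambda_max_def
  using eigenvalue_Wbar_1 eigenvalue_Wbar_bounds(2) finite_eigenvalues[OF mixture_carrier]
  by (intro Max_eqI) auto

lemma P_carrier: "P \<in> carrier_mat n n"
  by simp

lemma Wbar_carrier: "Wbar \<in> carrier_mat n n"
  by simp

lemma Wbar_minus_P_carrier: "Wbar - P \<in> carrier_mat n n"
  by (rule minus_carrier_mat[OF P_carrier])

lemma P_mult_Wbar_minus_P: "P * (Wbar - P) = 0\<^sub>m n n"
proof -
  have "P * (Wbar - P) = P * Wbar - P * P"
    by (rule mult_minus_distrib_mat[OF P_carrier Wbar_carrier P_carrier])
  then show ?thesis by (simp add: P_mult_Wbar block_avg_mat_idem)
qed

lemma P_mult_eigenvector_Wbar: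
  assumes v: "v \<in> carrier_vec n" and Wv: "Wbar *\<^sub>v v = k \<cdot>\<^sub>v v" and k: "k \<noteq> 1"
  shows "P *\<^sub>v v = 0\<^sub>v n"
proof (rule smult_vec_right_cancel[OF mult_mat_vec_carrier[OF P_carrier v] _ k])
  have "P *\<^sub>v v = P *\<^sub>v (Wbar *\<^sub>v v)"
    using assoc_mult_mat_vec[OF P_carrier Wbar_carrier v] by (simp add: P_mult_Wbar)
  then show "k \<cdot>\<^sub>v (P *\<^sub>v v) = 1 \<cdot>\<^sub>v (P *\<^sub>v v)"
    unfolding Wv mult_mat_vec[OF P_carrier v] by simp
qed

lemma P_mult_eigenvector_Wbar_minus_P:
  assumes v: "v \<in> carrier_vec n" and Wv: "(Wbar - P) *\<^sub>v v = k \<cdot>\<^sub>v v" and k: "k \<noteq> 0"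
  shows "P *\<^sub>v v = 0\<^sub>v n"
proof (rule smult_vec_right_cancel[OF mult_mat_vec_carrier[OF P_carrier v] _ k])
  have "k \<cdot>\<^sub>v (P *\<^sub>v v) = (P * (Wbar - P)) *\<^sub>v v"
    unfolding assoc_mult_mat_vec[OF P_carrier Wbar_minus_P_carrier v] Wv
    by (rule mult_mat_vec[OF P_carrier v, symmetric])
  then show "k \<cdot>\<^sub>v (P *\<^sub>v v) = 0 \<cdot>\<^sub>v (P *\<^sub>v v)"
    using zero_mult_mat_vec[OF v] zero_smult_vec[OF mult_mat_vec_carrier[OF P_carrier v]]
    by (simp add: P_mult_Wbar_minus_P)
qed

lemma eigenvalue_Wbar_minus_P_0: "eigenvalue (Wbar - P) 0"
proof -
  have "P *\<^sub>v ones = ones"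
    by (rule block_avg_mat_mult_vec_block_constant) (simp_all add: block_constant_def)
  then have "(Wbar - P) *\<^sub>v ones = 0 \<cdot>\<^sub>v ones"
    using Wbar_mult_ones zero_smult_vec[of ones n]
    by (simp add: minus_mult_distrib_mat_vec[OF Wbar_carrier P_carrier])
  then show ?thesis
    unfolding eigenvalue_def eigenvector_def using ones_nonzero by (auto intro!: exI[of _ ones])
qed

text \<open>\<open>r\<close> and \<open>r'\<close> lie in the same block, where \<open>P\<close> is constant, while
  \<open>Wbar $$ (r, r) > Wbar $$ (r, r')\<close>.\<close>

lemma Wbar_ne_P_if_unswapped:
  assumes r: "r < n" "r' < n" "r' \<noteq> r" "g r' = g r" and i: "i \<in> I" "\<sigma> i r \<noteq> r'"
  shows "Wbar \<noteq> P"
proof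
  assume eq: "Wbar = P"
  let ?\<delta> = "\<lambda>j. swap_avg_mat n (\<sigma> j) $$ (r, r) - swap_avg_mat n (\<sigma> j) $$ (r, r')"
  have \<delta>: "?\<delta> j = (1 + of_bool (r = \<sigma> j r) - of_bool (r' = \<sigma> j r)) / 2" for j
    using r by (simp add: index_swap_avg_mat diff_divide_distrib)
  have "0 < (\<Sum>j\<in>I. w j * ?\<delta> j)"
  proof (rule sum_pos2[OF finite_I i(1)])
    have "r' \<noteq> \<sigma> i r" using i(2) by auto
    then show "0 < w i * ?\<delta> i" unfolding \<delta> using w_pos[OF i(1)] by simp
    show "0 \<le> w j * ?\<delta> j" if "j \<in> I" for j
      unfolding \<delta> using w_pos[OF that] by (simp add: of_bool_def)
  qed
  also have "(\<Sum>j\<in>I. w j * ?\<delta> j) = Wbar $$ (r, r) - Wbar $$ (r, r')"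
    using r by (simp add: index_Wbar right_diff_distrib sum_subtractf)
  also have "\<dots> = 0" using r unfolding eq by (simp add: index_block_avg_mat)
  finally show False by simp
qed

end

locale connected_swap_mixture = swap_mixture +
  assumes invariant_imp_block_constant:
    "x \<in> carrier_vec n \<Longrightarrow> (\<And>i r. i \<in> I \<Longrightarrow> r < n \<Longrightarrow> x $ \<sigma> i r = x $ r)
      \<Longrightarrow> block_constant n g x"
begin

lemma eigenvalue_Wbar_minus_P_iff:
  "eigenvalue (Wbar - P) k \<longleftrightarrow> k = 0 \<or> (eigenvalue Wbar k \<and> k \<noteq> 1)"
proof
  assume "eigenvalue (Wbar - P) k"
  then obtain v where v: "v \<in> carrier_vec n" "v \<noteq> 0\<^sub>v n" "(Wbar - P) *\<^sub>v v = k \<cdot>\<^sub>v v"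
    unfolding eigenvalue_def eigenvector_def by auto
  show "k = 0 \<or> (eigenvalue Wbar k \<and> k \<noteq> 1)"
  proof (cases "k = 0")
    case False
    have Pv: "P *\<^sub>v v = 0\<^sub>v n" by (rule P_mult_eigenvector_Wbar_minus_P[OF v(1,3) False])
    then have Wv: "Wbar *\<^sub>v v = k \<cdot>\<^sub>v v"
      using v(3) mult_mat_vec_carrier[OF Wbar_carrier v(1)]
      by (simp add: minus_mult_distrib_mat_vec[OF Wbar_carrier P_carrier v(1)])
    have "k \<noteq> 1"
    proof
      assume "k = 1"
      then have "block_constant n g v"
        using Wv v(1) invariant_if_Wbar_fixed by (auto intro: invariant_imp_block_constant)
      then have "P *\<^sub>v v = v" by (rule block_avg_mat_mult_vec_block_constant[OF v(1)])
      then show False using Pv v(2) by simp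
    qed
    then show ?thesis unfolding eigenvalue_def eigenvector_def using v Wv by auto
  qed simp
next
  assume "k = 0 \<or> (eigenvalue Wbar k \<and> k \<noteq> 1)"
  then show "eigenvalue (Wbar - P) k"
  proof
    assume k: "eigenvalue Wbar k \<and> k \<noteq> 1"
    then obtain v where v: "v \<in> carrier_vec n" "v \<noteq> 0\<^sub>v n" "Wbar *\<^sub>v v = k \<cdot>\<^sub>v v"
      unfolding eigenvalue_def eigenvector_def by auto
    have "(Wbar - P) *\<^sub>v v = k \<cdot>\<^sub>v v"
      using P_mult_eigenvector_Wbar[OF v(1,3)] k v
      by (simp add: minus_mult_distrib_mat_vec[OF Wbar_carrier P_carrier])
    then show ?thesis unfolding eigenvalue_def eigenvector_def using v by auto
  qed (simp add: eigenvalue_Wbar_minus_P_0)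
qed

lemma exists_eigenvalue_Wbar_ne_1:
  assumes "Wbar \<noteq> P"
  shows "\<exists>k. eigenvalue Wbar k \<and> k \<noteq> 1"
proof (rule ccontr)
  assume "\<not> ?thesis"
  then have "k = 0" if "eigenvalue (Wbar - P) k" for k
    using that eigenvalue_Wbar_minus_P_iff by blast
  then have WP0: "Wbar - P = 0\<^sub>m n n"
    by (intro symmetric_mat_eq_0_if_eigenvalues_0)
      (simp_all add: Wbar_minus_P_carrier transpose_minus[OF Wbar_carrier P_carrier]
        transpose_Wbar transpose_block_avg_mat)
  have "Wbar = P"
  proof (rule eq_matI)
    fix i j assume "i < dim_row P" "j < dim_col P"
    then show "Wbar $$ (i, j) = P $$ (i, j)" using arg_cong[OF WP0, of "\<lambda>A. A $$ (i, j)"] by simp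
  qed simp_all
  with assms show False ..
qed

lemma lambda_max_Wbar_minus_P:
  assumes "Wbar \<noteq> P"
  shows "lambda_max (Wbar - P) = lambda_2 Wbar"
proof -
  define S where "S = {k. eigenvalue Wbar k \<and> k \<noteq> 1}"
  have eig: "{k. eigenvalue (Wbar - P) k} = insert 0 S"
    unfolding S_def using eigenvalue_Wbar_minus_P_iff by auto
  have fin: "finite S"
    using finite_eigenvalues[OF mixture_carrier] unfolding S_def by (rule rev_finite_subset) auto
  have ne: "S \<noteq> {}" using exists_eigenvalue_Wbar_ne_1[OF assms] unfolding S_def by auto
  have "0 \<le> Max S" using Max_in[OF fin ne] eigenvalue_Wbar_bounds(1) unfolding S_def by auto
  then show ?thesis
    unfolding lambda_max_def lambda_2_def eig Max_insert[OF fin ne] S_def[symmetric] by simp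
qed

end

section \<open>Coordinates of the stacked state vector\<close>

locale simple_graph_slots =
  fixes N :: nat and E :: "nat set set"
  assumes simple: "simple_graph N E"
begin

abbreviation "nbhd \<equiv> cnbrs N E"
abbreviation "m \<equiv> mtot N E"

lemma edge_vertices:
  assumes "{i, j} \<in> E"
  shows "i \<noteq> j" "i \<in> {1..N}" "j \<in> {1..N}"
proof -
  obtain a b where "a \<in> {1..N}" "b \<in> {1..N}" "a \<noteq> b" "{i, j} = {a, b}"
    using simple assms unfolding simple_graph_def by blast
  then show "i \<noteq> j" "i \<in> {1..N}" "j \<in> {1..N}" by (auto simp: doubleton_eq_iff)
qed

lemma finite_nbhd [simp]: "finite (nbhd i)"
  unfolding cnbrs_def nbrs_def by simp

lemma self_in_nbhd: "i \<in> nbhd i"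
  unfolding cnbrs_def by simp

lemma nbhd_subset: "i \<in> {1..N} \<Longrightarrow> nbhd i \<subseteq> {1..N}"
  unfolding cnbrs_def nbrs_def by auto

lemma card_nbhd: "card (nbhd i) = mdeg N E i"
proof -
  have "i \<notin> nbrs N E i" using edge_vertices(1)[of i i] unfolding nbrs_def by auto
  then show ?thesis unfolding cnbrs_def mdeg_def by (simp add: nbrs_def)
qed

lemma nbhd_sym: "j \<in> nbhd i \<longleftrightarrow> i \<in> nbhd j"
  unfolding cnbrs_def nbrs_def using edge_vertices by (auto simp: insert_commute)

definition offset :: "nat \<Rightarrow> nat" where
  "offset i = (\<Sum>r = 1..<i. mdeg N E r)"

definition rank :: "nat \<Rightarrow> nat \<Rightarrow> nat" where
  "rank i l = card ({1..l} \<inter> nbhd i)"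

text \<open>\<open>slot i l\<close> is the 0-based position of \<open>E\<^sup>i\<^sub>l\<close>, the coordinate holding agent \<open>i\<close>'s
  copy of the state of agent \<open>l\<close>. Conversely, coordinate \<open>r\<close> belongs to agent \<open>owner r\<close> and
  carries \<open>label r\<close>.\<close>

definition slot :: "nat \<Rightarrow> nat \<Rightarrow> nat" where
  "slot i l = sidx N E i l - 1"

lemma sidx_eq: "sidx N E i l = rank i l + offset i"
proof -
  have "(\<Sum>l' = 1..l. Bent N E i l') = card {l' \<in> {1..l}. l' \<in> nbhd i}"
    unfolding Bent_def by (simp add: sum.If_cases Int_def)
  also have "{l' \<in> {1..l}. l' \<in> nbhd i} = {1..l} \<inter> nbhd i" by auto
  finally show ?thesis unfolding sidx_def rank_def offset_def by simp
qed

lemma rank_bounds: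
  assumes "i \<in> {1..N}" "l \<in> nbhd i"
  shows "1 \<le> rank i l" "rank i l \<le> mdeg N E i"
proof -
  have "l \<in> {1..l} \<inter> nbhd i" using nbhd_subset[OF assms(1)] assms(2) by auto
  then show "1 \<le> rank i l" unfolding rank_def
    by (metis One_nat_def Suc_leI card_gt_0_iff empty_iff finite_Int finite_atLeastAtMost)
  show "rank i l \<le> mdeg N E i" unfolding rank_def card_nbhd[symmetric] by (rule card_mono) auto
qed

lemma rank_strict_mono:
  assumes "i \<in> {1..N}" "l \<in> nbhd i" "l' \<in> nbhd i" "l < l'"
  shows "rank i l < rank i l'"
  unfolding rank_def
proof (rule psubset_card_mono)
  have l': "l' \<in> {1..l'} \<inter> nbhd i" "l' \<notin> {1..l} \<inter> nbhd i"
    using nbhd_subset[OF assms(1)] assms by auto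
  show "{1..l} \<inter> nbhd i \<subset> {1..l'} \<inter> nbhd i"
  proof
    show "{1..l} \<inter> nbhd i \<subseteq> {1..l'} \<inter> nbhd i" using assms(4) by auto
    show "{1..l} \<inter> nbhd i \<noteq> {1..l'} \<inter> nbhd i" using l' by blast
  qed
qed simp

lemma slot_eq: "i \<in> {1..N} \<Longrightarrow> l \<in> nbhd i \<Longrightarrow> slot i l = offset i + (rank i l - 1)"
  using rank_bounds unfolding slot_def sidx_eq by fastforce

lemma offset_Suc: "1 \<le> i \<Longrightarrow> offset (Suc i) = offset i + mdeg N E i"
  unfolding offset_def by simp

lemma offset_mono: "i \<le> i' \<Longrightarrow> offset i \<le> offset i'"
  unfolding offset_def by (rule sum_mono2) auto

lemma m_eq_offset: "m = offset (Suc N)"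
  unfolding mtot_def offset_def by (simp add: atLeastLessThanSuc_atLeastAtMost)

lemma slot_bounds:
  assumes "i \<in> {1..N}" "l \<in> nbhd i"
  shows "offset i \<le> slot i l" "slot i l < offset (Suc i)"
  using slot_eq[OF assms] rank_bounds[OF assms] offset_Suc[of i] assms by auto

lemma slot_less_m: "i \<in> {1..N} \<Longrightarrow> l \<in> nbhd i \<Longrightarrow> slot i l < m"
  using slot_bounds(2) offset_mono[of "Suc i" "Suc N"] m_eq_offset by fastforce

definition slot_domain :: "(nat \<times> nat) set" where
  "slot_domain = Sigma {1..N} nbhd"

lemma inj_on_slot: "inj_on (\<lambda>(i, l). slot i l) slot_domain"
proof (rule inj_onI)
  fix x y assume "x \<in> slot_domain" "y \<in> slot_domain"
    and eq': "(\<lambda>(i, l). slot i l) x = (\<lambda>(i, l). slot i l) y"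
  then obtain i l i' l' where xy: "x = (i, l)" "y = (i', l')"
    and a: "i \<in> {1..N}" "l \<in> nbhd i" "i' \<in> {1..N}" "l' \<in> nbhd i'"
    unfolding slot_domain_def by blast
  have eq: "slot i l = slot i' l'" using eq' xy by simp
  have "\<not> i < i'" "\<not> i' < i"
    using slot_bounds[OF a(1,2)] slot_bounds[OF a(3,4)] offset_mono[of "Suc i" i']
      offset_mono[of "Suc i'" i] eq by fastforce+
  then have i: "i = i'" by simp
  have "\<not> l < l'" "\<not> l' < l"
    using rank_strict_mono[OF a(1,2)] rank_strict_mono[OF a(1)] a rank_bounds[OF a(1,2)]
      rank_bounds[OF a(3,4)] eq slot_eq[OF a(1,2)] slot_eq[OF a(3,4)] i by fastforce+
  then show "x = y" using xy i by simp
qed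

lemma bij_betw_slot: "bij_betw (\<lambda>(i, l). slot i l) slot_domain {0..<m}"
proof -
  have "card slot_domain = m"
    unfolding slot_domain_def mtot_def card_nbhd[symmetric] by (rule card_SigmaI) auto
  moreover have "(\<lambda>(i, l). slot i l) ` slot_domain \<subseteq> {0..<m}"
    using slot_less_m unfolding slot_domain_def by auto
  ultimately have "(\<lambda>(i, l). slot i l) ` slot_domain = {0..<m}"
    using card_image[OF inj_on_slot] by (intro card_subset_eq) auto
  then show ?thesis using inj_on_slot unfolding bij_betw_def by simp
qed

definition owner :: "nat \<Rightarrow> nat" where
  "owner r = fst (the_inv_into slot_domain (\<lambda>(i, l). slot i l) r)"

definition label :: "nat \<Rightarrow> nat" where
  "label r = snd (the_inv_into slot_domain (\<lambda>(i, l). slot i l) r)"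

lemma owner_label_in_domain: "r < m \<Longrightarrow> (owner r, label r) \<in> slot_domain"
  unfolding owner_def label_def using the_inv_into_into[OF _ _ subset_refl] bij_betw_slot
  by (metis atLeastLessThan_iff bij_betw_def prod.collapse zero_le)

lemma slot_owner_label: "r < m \<Longrightarrow> slot (owner r) (label r) = r"
  unfolding owner_def label_def using f_the_inv_into_f bij_betw_slot
  by (metis (mono_tags, lifting) atLeastLessThan_iff bij_betw_def case_prod_beta zero_le)

lemma owner_range: "r < m \<Longrightarrow> owner r \<in> {1..N}"
  and label_in_nbhd: "r < m \<Longrightarrow> label r \<in> nbhd (owner r)"
  using owner_label_in_domain unfolding slot_domain_def by auto

lemma label_range: "r < m \<Longrightarrow> label r \<in> {1..N}"
  using label_in_nbhd owner_range nbhd_subset by blast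

lemma owner_label_slot:
  assumes "i \<in> {1..N}" "l \<in> nbhd i"
  shows "owner (slot i l) = i" "label (slot i l) = l"
proof -
  have "the_inv_into slot_domain (\<lambda>(i, l). slot i l) (slot i l) = (i, l)"
    using the_inv_into_f_f[OF inj_on_slot, of "(i, l)"] assms unfolding slot_domain_def by simp
  then show "owner (slot i l) = i" "label (slot i l) = l" unfolding owner_def label_def by auto
qed

lemma eq_slot_iff:
  "r < m \<Longrightarrow> i \<in> {1..N} \<Longrightarrow> l \<in> nbhd i \<Longrightarrow> r = slot i l \<longleftrightarrow> owner r = i \<and> label r = l"
  using owner_label_slot slot_owner_label by auto

lemma card_label_class:
  assumes l: "l \<in> {1..N}"
  shows "card {k \<in> {0..<m}. label k = l} = mdeg N E l"
proof -
  have "{k \<in> {0..<m}. label k = l} = (\<lambda>i. slot i l) ` nbhd l"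
  proof (intro equalityI subsetI)
    fix k assume "k \<in> {k \<in> {0..<m}. label k = l}"
    then have k: "k < m" "label k = l" by auto
    then have "owner k \<in> nbhd l" using label_in_nbhd nbhd_sym by blast
    then show "k \<in> (\<lambda>i. slot i l) ` nbhd l" using slot_owner_label[OF k(1)] k(2) by force
  next
    fix k assume "k \<in> (\<lambda>i. slot i l) ` nbhd l"
    then obtain i where i: "i \<in> nbhd l" "k = slot i l" by auto
    then have "i \<in> {1..N}" "l \<in> nbhd i" using nbhd_subset[OF l] nbhd_sym by auto
    then show "k \<in> {k \<in> {0..<m}. label k = l}" using slot_less_m owner_label_slot i(2) by auto
  qed
  moreover have "inj_on (\<lambda>i. slot i l) (nbhd l)"
    by (rule inj_onI) (metis owner_label_slot(1) nbhd_subset[OF l] nbhd_sym subsetD)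
  ultimately show ?thesis using card_image card_nbhd by metis
qed

lemma slot_eqI:
  assumes "x < m" "y < m" "label x = label y" "owner x = owner y"
  shows "x = y"
  using slot_owner_label assms by metis

lemma dim_Evec [simp]: "dim_vec (Evec N E i l) = m"
  unfolding Evec_def by simp

lemma index_Evec:
  assumes "i \<in> {1..N}" "r < m"
  shows "Evec N E i l $ r = of_bool (owner r = i \<and> label r = l)"
proof (cases "l \<in> nbhd i")
  case True
  then have "Evec N E i l = unit_vec m (slot i l)" unfolding Evec_def slot_def by simp
  then show ?thesis using slot_less_m[OF assms(1) True] assms(2) eq_slot_iff[OF assms(2,1) True]
    by simp
next
  case False
  then show ?thesis using label_in_nbhd[OF assms(2)] assms(2) unfolding Evec_def by auto
qed

lemma index_Hmat:
  assumes "r < m" "c < N"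
  shows "Hmat N E $$ (r, c) = of_bool (label r = c + 1)"
proof -
  have "Hmat N E $$ (r, c) = (\<Sum>i\<in>{1..N}. of_bool (i = owner r) * of_bool (label r = c + 1))"
    unfolding Hmat_def using assms by (auto simp: index_Evec intro: sum.cong)
  then show ?thesis using owner_range[OF assms(1)] by (simp add: of_bool_def)
qed

lemma index_Hbar:
  assumes "r < N" "c < m"
  shows "Hbar N E $$ (r, c) = of_bool (label c = r + 1) / real (mdeg N E (r + 1))"
  unfolding Hbar_def using assms by (simp add: index_Hmat)

lemma Hmat_mult_Hbar: "Hmat N E * Hbar N E = block_avg_mat m label"
proof (rule eq_matI)
  fix r c assume "r < dim_row (block_avg_mat m label)" "c < dim_col (block_avg_mat m label)"
  then have r: "r < m" and c: "c < m" by auto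
  have l: "label r \<in> {1..N}" using label_range[OF r] .
  have "(Hmat N E * Hbar N E) $$ (r, c) = (\<Sum>k\<in>{0..<N}. Hmat N E $$ (r, k) * Hbar N E $$ (k, c))"
    using r c by (simp add: scalar_prod_def Hmat_def Hbar_def)
  also have "\<dots> = (\<Sum>k\<in>{0..<N}.
      if k = label r - 1 then of_bool (label c = label r) / real (mdeg N E (label r)) else 0)"
    by (rule sum.cong[OF refl]) (use r c l in \<open>auto simp: index_Hmat index_Hbar\<close>)
  also have "\<dots> = block_avg_mat m label $$ (r, c)"
    using r c l card_label_class[OF l] by (auto simp: index_block_avg_mat)
  finally show "(Hmat N E * Hbar N E) $$ (r, c) = block_avg_mat m label $$ (r, c)" .
qed (simp_all add: Hmat_def Hbar_def)

definition exchange :: "nat \<Rightarrow> nat \<Rightarrow> nat \<Rightarrow> nat" where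
  "exchange i j r =
     (if owner r = i \<and> label r \<in> ind N E i j then slot j (label r)
      else if owner r = j \<and> label r \<in> ind N E i j then slot i (label r) else r)"

lemma exchange_moved:
  assumes ij: "i \<in> {1..N}" "j \<in> {1..N}" "i \<noteq> j" and r: "r < m"
    and moved: "owner r \<in> {i, j}" "label r \<in> ind N E i j"
  defines "i' \<equiv> if owner r = i then j else i"
  shows "exchange i j r < m" "owner (exchange i j r) = i'" "label (exchange i j r) = label r"
proof -
  have "i' \<in> {1..N}" "label r \<in> nbhd i'" using ij moved unfolding i'_def ind_def by auto
  moreover have "exchange i j r = slot i' (label r)"
    using moved ij unfolding exchange_def i'_def by auto
  ultimately show "exchange i j r < m" "owner (exchange i j r) = i'"
    "label (exchange i j r) = label r"
    using slot_less_m owner_label_slot by auto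
qed

lemma exchange_fixed:
  "\<not> (owner r \<in> {i, j} \<and> label r \<in> ind N E i j) \<Longrightarrow> exchange i j r = r"
  unfolding exchange_def by auto

lemma exchange_eq_slot: "owner r = i \<Longrightarrow> l \<in> ind N E i j \<Longrightarrow> label r = l \<Longrightarrow> exchange i j r = slot j l"
  unfolding exchange_def by simp

lemma exchange_props:
  assumes ij: "i \<in> {1..N}" "j \<in> {1..N}" "i \<noteq> j" and r: "r < m"
  shows "exchange i j r < m \<and> label (exchange i j r) = label r \<and> exchange i j (exchange i j r) = r"
proof (cases "owner r \<in> {i, j} \<and> label r \<in> ind N E i j")
  case True
  then have mv: "owner r \<in> {i, j}" "label r \<in> ind N E i j" by auto
  note e = exchange_moved[OF ij r mv]
  have mv': "owner (exchange i j r) \<in> {i, j}" "label (exchange i j r) \<in> ind N E i j"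
    using e mv by auto
  note e' = exchange_moved[OF ij e(1) mv']
  have "exchange i j (exchange i j r) = r"
    by (rule slot_eqI[OF e'(1) r]) (use e e' mv ij in auto)
  then show ?thesis using e by simp
next
  case False
  then show ?thesis using r by (simp add: exchange_fixed)
qed

lemma involution_exchange:
  "i \<in> {1..N} \<Longrightarrow> j \<in> {1..N} \<Longrightarrow> i \<noteq> j \<Longrightarrow> involution_below m (exchange i j)"
  unfolding involution_below_def using exchange_props by blast

lemma Wmat_eq_swap_avg_mat:
  assumes ij: "i \<in> {1..N}" "j \<in> {1..N}" "i \<noteq> j"
  shows "Wmat N E i j = swap_avg_mat m (exchange i j)"
proof (rule eq_matI)
  fix r c
  assume "r < dim_row (swap_avg_mat m (exchange i j))" "c < dim_col (swap_avg_mat m (exchange i j))"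
  then have r: "r < m" and c: "c < m" by auto
  define s where "s x = (of_bool (owner x = i) - of_bool (owner x = j) :: real)" for x
  let ?I = "ind N E i j"
  have diff: "(Evec N E i l - Evec N E j l) $ x = (if l = label x then s x else 0)"
    if "x < m" for x l
    using that ij by (auto simp: index_Evec s_def)
  have "(\<Sum>l\<in>?I. (Evec N E i l - Evec N E j l) $ r * (Evec N E i l - Evec N E j l) $ c)
      = (\<Sum>l\<in>?I. if l = label r then (if label c = label r then s r * s c else 0) else 0)"
    by (rule sum.cong[OF refl]) (simp only: diff[OF r] diff[OF c], simp)
  also have "\<dots> = (if label r \<in> ?I \<and> label c = label r then s r * s c else 0)"
    by (simp add: sum.delta' ind_def)
  finally have W: "Wmat N E i j $$ (r, c)
      = of_bool (r = c) - (if label r \<in> ?I \<and> label c = label r then s r * s c else 0) / 2"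
    unfolding Wmat_def using r c by simp
  show "Wmat N E i j $$ (r, c) = swap_avg_mat m (exchange i j) $$ (r, c)"
  proof (cases "owner r \<in> {i, j} \<and> label r \<in> ?I")
    case True
    then have mv: "owner r \<in> {i, j}" "label r \<in> ?I" by auto
    define r' where "r' = exchange i j r"
    have r': "r' < m" "owner r' \<in> {i, j}" "owner r' \<noteq> owner r" "label r' = label r"
      using exchange_moved[OF ij r mv] mv ij unfolding r'_def by auto
    have s: "s r * s r = 1" "s r * s r' = -1" using mv r' ij by (auto simp: s_def)
    have "r' \<noteq> r" using r' by auto
    consider "c = r" | "c = r'" | "c \<noteq> r" "c \<noteq> r'" by blast
    then show ?thesis
    proof cases
      case 3
      have "s c = 0" if "label c = label r"
        using slot_eqI[OF c r] slot_eqI[OF c r'(1)] that 3 mv r' ij by (auto simp: s_def)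
      then show ?thesis using W 3 r c by (auto simp: index_swap_avg_mat r'_def[symmetric])
    qed (use W s mv r' \<open>r' \<noteq> r\<close> r c in \<open>auto simp: index_swap_avg_mat r'_def[symmetric]\<close>)
  next
    case False
    then have "exchange i j r = r" "(if label r \<in> ?I \<and> label c = label r then s r * s c else 0) = 0"
      using ij by (auto simp: exchange_fixed s_def)
    then show ?thesis using W r c by (simp add: index_swap_avg_mat)
  qed
qed (simp_all add: Wmat_def)

lemma label_exchange:
  "i \<in> {1..N} \<Longrightarrow> j \<in> {1..N} \<Longrightarrow> i \<noteq> j \<Longrightarrow> r < m \<Longrightarrow> label (exchange i j r) = label r"
  using exchange_props by blast

lemma Qmat_eq:
  assumes "i \<in> {1..N}" "j \<in> {1..N}" "i \<noteq> j"
  shows "Qmat N E i j = swap_avg_mat m (exchange i j) - block_avg_mat m label"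
  unfolding Qmat_def Hmat_mult_Hbar Wmat_eq_swap_avg_mat[OF assms]
  using block_avg_mat_mult_swap_avg_mat[where g = label,
      OF involution_exchange[OF assms] label_exchange[OF assms]]
  by simp

lemma Qmat_gram:
  assumes "i \<in> {1..N}" "j \<in> {1..N}" "i \<noteq> j"
  shows "(Qmat N E i j)\<^sup>T * Qmat N E i j = swap_avg_mat m (exchange i j) - block_avg_mat m label"
  unfolding Qmat_eq[OF assms]
  by (rule swap_avg_minus_block_avg_gram[where g = label,
        OF involution_exchange[OF assms] label_exchange[OF assms]])

end

section \<open>The gossip setting\<close>

locale graph_setting = simple_graph_slots N EI for N :: nat and EI :: "nat set set" +
  fixes EC Em :: "nat set set"
  assumes N_ge_2: "N \<ge> 2"
    and connected: "graph_connected N EI"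
    and not_complete: "\<not> graph_complete N EI"
    and maximal: "max_triangle_free_spanning EI Em"
    and Em_sub_EC: "Em \<subseteq> EC" and EC_sub_EI: "EC \<subseteq> EI"
begin

lemma exists_edge_from_path:
  assumes "(i, j) \<in> {(a, b). {a, b} \<in> EI}\<^sup>*" "i \<noteq> j"
  shows "\<exists>b. {i, b} \<in> EI"
  using assms by (cases rule: converse_rtranclE) auto

lemma exists_edge:
  assumes i: "i \<in> {1..N}"
  shows "\<exists>b. {i, b} \<in> EI"
proof -
  define j :: nat where "j = (if i = 1 then 2 else 1)"
  have j: "j \<in> {1..N}" "j \<noteq> i" using N_ge_2 i unfolding j_def by auto
  then show ?thesis
    using connected i exists_edge_from_path unfolding graph_connected_def by blast
qed

lemma N_ge_3: "N \<ge> 3"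
proof (rule ccontr)
  assume "\<not> N \<ge> 3"
  then have N: "N = 2" using N_ge_2 by simp
  obtain b where b: "{1, b} \<in> EI" using exists_edge[of 1] N by auto
  then have "b = 2" using edge_vertices[OF b] N by auto
  have "graph_complete N EI" unfolding graph_complete_def
  proof (intro ballI impI)
    fix i j :: nat assume "i \<in> {1..N}" "j \<in> {1..N}" "i \<noteq> j"
    then have "{i, j} = {1, 2}" using N by auto
    then show "{i, j} \<in> EI" using b \<open>b = 2\<close> by simp
  qed
  then show False using not_complete by simp
qed

lemma third_vertex:
  assumes "{x, y} = {i, l}" "z \<noteq> x" "z \<noteq> y" "{x, z} \<in> Em" "{y, z} \<in> Em"
  shows "\<exists>c. c \<noteq> i \<and> c \<noteq> l \<and> {i, c} \<in> Em \<and> {l, c} \<in> Em"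
  using assms by (auto simp: doubleton_eq_iff)

lemma triangle_through_missing_edge:
  assumes e: "{i, l} \<in> EI" "{i, l} \<notin> Em"
  obtains a b c where "a \<noteq> b" "b \<noteq> c" "a \<noteq> c"
    "{a, b} \<in> insert {i, l} Em" "{b, c} \<in> insert {i, l} Em" "{a, c} \<in> insert {i, l} Em"
    "\<not> ({a, b} \<in> Em \<and> {b, c} \<in> Em \<and> {a, c} \<in> Em)"
proof -
  have tf: "triangle_free Em" and all: "\<forall>e\<in>EI - Em. \<not> triangle_free (insert e Em)"
    using maximal unfolding max_triangle_free_spanning_def by blast+
  have "\<not> triangle_free (insert {i, l} Em)" using all e by blast
  then have "\<exists>a b c. a \<noteq> b \<and> b \<noteq> c \<and> a \<noteq> c \<and> {a, b} \<in> insert {i, l} Em \<and>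
      {b, c} \<in> insert {i, l} Em \<and> {a, c} \<in> insert {i, l} Em"
    unfolding triangle_free_def by (simp only: not_not)
  then obtain a b c where abc: "a \<noteq> b" "b \<noteq> c" "a \<noteq> c"
    "{a, b} \<in> insert {i, l} Em" "{b, c} \<in> insert {i, l} Em" "{a, c} \<in> insert {i, l} Em"
    by metis
  moreover have "\<not> ({a, b} \<in> Em \<and> {b, c} \<in> Em \<and> {a, c} \<in> Em)"
  proof
    assume "{a, b} \<in> Em \<and> {b, c} \<in> Em \<and> {a, c} \<in> Em"
    then have "\<exists>a b c. a \<noteq> b \<and> b \<noteq> c \<and> a \<noteq> c \<and> {a, b} \<in> Em \<and> {b, c} \<in> Em \<and> {a, c} \<in> Em"
      using abc(1-3) by metis
    then show False using tf unfolding triangle_free_def by (simp only: not_True_eq_False)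
  qed
  ultimately show ?thesis using that by blast
qed

lemma triangle_completion:
  assumes e: "{i, l} \<in> EI" "{i, l} \<notin> Em"
  shows "\<exists>c. c \<noteq> i \<and> c \<noteq> l \<and> {i, c} \<in> Em \<and> {l, c} \<in> Em"
proof -
  obtain a b c where abc: "a \<noteq> b" "b \<noteq> c" "a \<noteq> c"
    "{a, b} \<in> insert {i, l} Em" "{b, c} \<in> insert {i, l} Em" "{a, c} \<in> insert {i, l} Em"
    and "\<not> ({a, b} \<in> Em \<and> {b, c} \<in> Em \<and> {a, c} \<in> Em)"
    using triangle_through_missing_edge[OF e] .
  then consider "{a, b} \<notin> Em" | "{b, c} \<notin> Em" | "{a, c} \<notin> Em" by blast
  moreover have d: "{a, b} \<noteq> {b, c}" "{a, b} \<noteq> {a, c}" "{b, c} \<noteq> {a, c}"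
    using abc(1-3) by (simp_all add: doubleton_eq_iff)
  moreover have ba: "{b, a} = {a, b}" "{c, a} = {a, c}" "{c, b} = {b, c}"
    by (simp_all add: insert_commute)
  ultimately show ?thesis
  proof cases
    case 1
    then have q: "{a, b} = {i, l}" using abc(4) by (metis insert_iff)
    have "{a, c} \<in> Em" "{b, c} \<in> Em" using abc(5,6) d q by (metis insert_iff)+
    then show ?thesis using third_vertex[OF q] abc(1-3) by metis
  next
    case 2
    then have q: "{b, c} = {i, l}" using abc(5) by (metis insert_iff)
    have "{b, a} \<in> Em" "{c, a} \<in> Em" using abc(4,6) d q ba by (metis insert_iff)+
    then show ?thesis using third_vertex[OF q] abc(1-3) by metis
  next
    case 3
    then have q: "{a, c} = {i, l}" using abc(6) by (metis insert_iff)
    have "{a, b} \<in> Em" "{c, b} \<in> Em" using abc(4,5) d q ba by (metis insert_iff)+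
    then show ?thesis using third_vertex[OF q] abc(1-3) by metis
  qed
qed

lemma nbrs_EC_subset: "nbrs N EC i \<subseteq> nbrs N EI i"
  unfolding nbrs_def using EC_sub_EI by auto

lemma edge_EC_nbrs: "{i, j} \<in> EC \<Longrightarrow> j \<in> nbrs N EC i"
  using edge_vertices EC_sub_EI unfolding nbrs_def by auto

lemma nbrs_EC_nonempty:
  assumes i: "i \<in> {1..N}"
  shows "nbrs N EC i \<noteq> {}"
proof -
  obtain b where b: "{i, b} \<in> EI" using exists_edge[OF i] by blast
  show ?thesis
  proof (cases "{i, b} \<in> Em")
    case True
    then show ?thesis using edge_EC_nbrs Em_sub_EC by blast
  next
    case False
    then obtain c where "{i, c} \<in> Em" using triangle_completion[OF b] by blast
    then show ?thesis using edge_EC_nbrs Em_sub_EC by blast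
  qed
qed

definition pairs :: "(nat \<times> nat) set" where
  "pairs = Sigma {1..N} (nbrs N EC)"

definition weight :: "nat \<times> nat \<Rightarrow> real" where
  "weight p = 1 / real N * (1 / real (card (nbrs N EC (fst p))))"

lemma pairsD: "p \<in> pairs \<Longrightarrow> fst p \<in> {1..N} \<and> snd p \<in> {1..N} \<and> fst p \<noteq> snd p"
  unfolding pairs_def nbrs_def using EC_sub_EI edge_vertices(1)[of "fst p" "fst p"] by auto

lemma edge_EC_pair: "{i, j} \<in> EC \<Longrightarrow> (i, j) \<in> pairs"
  unfolding pairs_def using edge_EC_nbrs edge_vertices EC_sub_EI by auto

lemma finite_nbrs_EC: "finite (nbrs N EC i)"
  unfolding nbrs_def by simp

lemma sum_weight_pairs: "(\<Sum>p\<in>pairs. weight p) = 1"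
proof -
  have "(\<Sum>p\<in>pairs. weight p) = (\<Sum>i\<in>{1..N}. \<Sum>j\<in>nbrs N EC i. weight (i, j))"
    unfolding pairs_def by (subst sum.Sigma) (simp_all add: finite_nbrs_EC split_def)
  also have "\<dots> = (\<Sum>i\<in>{1..N}. 1 / real N)"
    using nbrs_EC_nonempty finite_nbrs_EC by (intro sum.cong) (auto simp: weight_def)
  finally show ?thesis using N_ge_2 by simp
qed

lemma weight_pos: "p \<in> pairs \<Longrightarrow> 0 < weight p"
  using nbrs_EC_nonempty pairsD finite_nbrs_EC N_ge_2
  by (auto simp: weight_def card_gt_0_iff)

lemma m_pos: "0 < m"
proof -
  have "mdeg N EI 1 \<le> m" unfolding mtot_def using N_ge_2 by (intro member_le_sum) auto
  then show ?thesis unfolding mdeg_def by simp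
qed

lemma nbhd_edge: "l \<in> nbhd i \<Longrightarrow> l \<noteq> i \<Longrightarrow> {i, l} \<in> EI"
  unfolding cnbrs_def nbrs_def by auto

lemma in_ind: "l \<in> nbhd i \<Longrightarrow> l \<in> nbhd j \<Longrightarrow> l \<in> ind N EI i j"
  unfolding ind_def by simp

lemma exchange_invariant_imp_block_constant:
  assumes x: "x \<in> carrier_vec m"
    and inv: "\<And>p r. p \<in> pairs \<Longrightarrow> r < m \<Longrightarrow> x $ exchange (fst p) (snd p) r = x $ r"
  shows "block_constant m label x"
proof -
  have to_diag: "x $ slot i l = x $ slot l l" if i: "i \<in> {1..N}" and li: "l \<in> nbhd i" for i l
  proof (cases "l = i")
    case False
    have l: "l \<in> {1..N}" and ll: "l \<in> nbhd l" using nbhd_subset[OF i] li self_in_nbhd by auto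
    have r: "slot i l < m" "owner (slot i l) = i" "label (slot i l) = l"
      using slot_less_m[OF i li] owner_label_slot[OF i li] by auto
    have e: "{i, l} \<in> EI" using nbhd_edge[OF li False] .
    show ?thesis
    proof (cases "{i, l} \<in> EC")
      case True
      have "exchange i l (slot i l) = slot l l"
        using exchange_eq_slot[OF r(2) in_ind[OF li ll] r(3)] .
      then show ?thesis using inv[OF edge_EC_pair[OF True] r(1)] by simp
    next
      txt \<open>Maximality of \<open>G\<^sub>m\<close> closes a triangle \<open>i, l, c\<close> in \<open>G\<^sub>m\<close>; the exchanges of
        \<open>(i, c)\<close> and \<open>(c, l)\<close> lead from \<open>slot i l\<close> to \<open>slot l l\<close> via \<open>slot c l\<close>.\<close>
      case False
      then obtain c where c: "{i, c} \<in> Em" "{l, c} \<in> Em"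
        using triangle_completion[OF e] Em_sub_EC by blast
      have cl_EC: "{c, l} \<in> EC" using c(2) Em_sub_EC insert_commute[of c l "{}"] by auto
      have ic: "(i, c) \<in> pairs" using edge_EC_pair c(1) Em_sub_EC by blast
      have cl: "(c, l) \<in> pairs" by (rule edge_EC_pair[OF cl_EC])
      have c1: "c \<in> {1..N}" using pairsD[OF cl] by simp
      have lc: "l \<in> nbhd c"
        using cl_EC EC_sub_EI l unfolding cnbrs_def nbrs_def by auto
      have "exchange i c (slot i l) = slot c l"
        using exchange_eq_slot[OF r(2) in_ind[OF li lc] r(3)] .
      moreover have "exchange c l (slot c l) = slot l l"
        using exchange_eq_slot[OF _ in_ind[OF lc ll]] owner_label_slot[OF c1 lc] by simp
      ultimately show ?thesis
        using inv[OF ic r(1)] inv[OF cl slot_less_m[OF c1 lc]] by simp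
    qed
  qed simp
  have "x $ r = x $ slot (label r) (label r)" if "r < m" for r
    using to_diag[OF owner_range[OF that] label_in_nbhd[OF that]] slot_owner_label[OF that] by simp
  then show ?thesis unfolding block_constant_def by metis
qed

end

sublocale graph_setting \<subseteq> connected_swap_mixture m label pairs weight "\<lambda>p. exchange (fst p) (snd p)"
proof unfold_locales
  show "finite pairs" unfolding pairs_def by (simp add: finite_nbrs_EC)
  show "\<And>p. p \<in> pairs \<Longrightarrow> involution_below m (exchange (fst p) (snd p))"
    using involution_exchange pairsD by blast
  show "\<And>p r. p \<in> pairs \<Longrightarrow> r < m \<Longrightarrow> label (exchange (fst p) (snd p) r) = label r"
    using label_exchange pairsD by blast
qed (simp_all add: m_pos weight_pos sum_weight_pairs exchange_invariant_imp_block_constant)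

context graph_setting
begin

lemma expect_eq_mixture: "expect N EC m F = mixture (\<lambda>p. F (fst p) (snd p))"
proof (rule eq_matI)
  fix r c assume "r < dim_row (mixture (\<lambda>p. F (fst p) (snd p)))"
    and "c < dim_col (mixture (\<lambda>p. F (fst p) (snd p)))"
  then have r: "r < m" and c: "c < m" by auto
  have "expect N EC m F $$ (r, c) = (\<Sum>i\<in>{1..N}. \<Sum>j\<in>nbrs N EC i. weight (i, j) * F i j $$ (r, c))"
    unfolding expect_def weight_def using r c by simp
  also have "\<dots> = (\<Sum>p\<in>pairs. weight p * F (fst p) (snd p) $$ (r, c))"
    unfolding pairs_def by (subst sum.Sigma) (simp_all add: finite_nbrs_EC split_def)
  also have "\<dots> = mixture (\<lambda>p. F (fst p) (snd p)) $$ (r, c)"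
    by (rule index_mixture[symmetric, OF r c])
  finally show "expect N EC m F $$ (r, c) = mixture (\<lambda>p. F (fst p) (snd p)) $$ (r, c)" .
qed (simp_all add: expect_def)

lemma expect_Wmat: "expect N EC m (Wmat N EI) = Wbar"
  unfolding expect_eq_mixture using Wmat_eq_swap_avg_mat pairsD by (intro mixture_cong) blast

lemma expect_Qmat_gram: "expect N EC m (\<lambda>i j. (Qmat N EI i j)\<^sup>T * Qmat N EI i j) = Wbar - P"
proof -
  have "expect N EC m (\<lambda>i j. (Qmat N EI i j)\<^sup>T * Qmat N EI i j)
      = mixture (\<lambda>p. swap_avg_mat m (exchange (fst p) (snd p)) - P)"
    unfolding expect_eq_mixture using Qmat_gram pairsD by (intro mixture_cong) blast
  then show ?thesis by (simp add: mixture_swap_avg_minus_P)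
qed

lemma Wbar_ne_P: "Wbar \<noteq> P"
proof -
  have one: "1 \<in> {1..N}" using N_ge_2 by simp
  obtain b where b: "b \<in> nbrs N EC 1" using nbrs_EC_nonempty[OF one] by blast
  then have "(1, b) \<in> pairs" unfolding pairs_def using one by simp
  then have b1: "b \<in> {1..N}" "b \<noteq> 1" using pairsD by fastforce+
  have one_b: "1 \<in> nbhd b" using b nbrs_EC_subset nbhd_sym unfolding cnbrs_def by blast
  define c :: nat where "c = (if b = 2 then 3 else 2)"
  have c: "c \<in> {1..N}" "c \<noteq> 1" "c \<noteq> b" using N_ge_3 b1 by (auto simp: c_def)
  obtain d where "d \<in> nbrs N EC c" using nbrs_EC_nonempty[OF c(1)] by blast
  then have cd: "(c, d) \<in> pairs" unfolding pairs_def using c(1) by simp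
  then have cd': "c \<in> {1..N}" "d \<in> {1..N}" "c \<noteq> d" using pairsD by fastforce+
  have r: "slot 1 1 < m" "owner (slot 1 1) = 1" "label (slot 1 1) = 1"
    using slot_less_m[OF one self_in_nbhd] owner_label_slot[OF one self_in_nbhd] by auto
  have r': "slot b 1 < m" "owner (slot b 1) = b" "label (slot b 1) = 1"
    using slot_less_m[OF b1(1) one_b] owner_label_slot[OF b1(1) one_b] by auto
  txt \<open>\<open>slot 1 1\<close> and \<open>slot b 1\<close> carry the same label, and since \<open>c \<notin> {1, b}\<close>
    the exchange of \<open>(c, d)\<close> cannot move the first onto the second.\<close>
  have "owner (exchange c d (slot 1 1)) \<noteq> b"
  proof (cases "owner (slot 1 1) \<in> {c, d} \<and> label (slot 1 1) \<in> ind N EI c d")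
    case True
    then show ?thesis using exchange_moved[OF cd' r(1)] r(2) c by auto
  qed (use exchange_fixed r(2) b1 in auto)
  then have "exchange c d (slot 1 1) \<noteq> slot b 1" using r' by auto
  moreover have "slot b 1 \<noteq> slot 1 1" using r r' b1 by metis
  ultimately show ?thesis
    using Wbar_ne_P_if_unswapped[OF r(1) r'(1) _ _ cd] r r' by simp
qed

end

theorem lemma9:
  fixes N :: nat and EI EC Em :: "nat set set"
  assumes "N \<ge> 2"
    and "simple_graph N EI"
    and "graph_connected N EI"
    and "\<not> graph_complete N EI"
    and "max_triangle_free_spanning EI Em"
    and "Em \<subseteq> EC" and "EC \<subseteq> EI"
  defines "Wb \<equiv> expect N EC (mtot N EI) (Wmat N EI)"
  shows "doubly_stochastic Wb \<and> lambda_max Wb = 1 \<and>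
         lambda_max (expect N EC (mtot N EI) (\<lambda>i j. (Qmat N EI i j)\<^sup>T * Qmat N EI i j))
           = lambda_2 Wb"
proof -
  interpret graph_setting N EI EC Em
    using assms(1-7) by unfold_locales
  show ?thesis
    unfolding Wb_def expect_Wmat expect_Qmat_gram
    using doubly_stochastic_Wbar lambda_max_Wbar lambda_max_Wbar_minus_P[OF Wbar_ne_P] by simp
qed

end
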